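(* Let $K$ be any local field with ring of integers $\mathcal O$, residue field $\mathbf F$, and $q=\#\mathbf F$. Let $(H_n)_{n\ge1}$ be a sequence of open subgroups of $\mathcal O$ with $H_{n+1}\subseteq H_n$ and $\bigcap_n H_n=0$. Suppose $e_0,e_1,e_2,\dots\in C(\mathcal O,K)$ each map $\mathcal O$ into $\mathcal O$, and that for every $n\ge1$ the reductions $\overline e_0,\dots,\overline e_{n-1}\in C(\mathcal O,\mathbf F)$ are constant on cosets of $H_n$ and the induced map $\mathcal O/H_n\to\mathbf F^n$, $x\mapsto(\overline e_0(x),\dots,\overline e_{n-1}(x))$, is bijective (so $\#\mathcal O/H_n=q^n$). Then the extension of $(e_j)$ by $q$-digit expansions is an orthonormal basis of $C(\mathcal O,K)$.
   Context: A local field is a field complete with respect to a nontrivial discrete nonarchimedean absolute value with finite residue field. $C(\mathcal O,K)$ is the $K$-Banach space of continuous functions $\mathcal O\to K$ with the sup-norm; $C(\mathcal O,\mathbf F)$ is the space of continuous (i.e. locally constant) maps to the discrete field $\mathbf F$; $\overline e$ denotes $e$ composed with reduction $\mathcal O\to\mathbf F$. An orthonormal basis of a $K$-Banach space $E$ is a sequence $\{f_n\}$ such that each $x\in E$ is $x=\sum c_nf_n$ with $c_n\in K$, $c_n\to0$, $\|x\|=\max|c_n|$. Extension by $q$-digits: for $i=c_0+c_1q+\dots+c_{n-1}q^{n-1}$ with $0\le c_j\le q-1$, set $f_i=e_0^{c_0}\cdots e_{n-1}^{c_{n-1}}$ (pointwise products, $e_j^0=1$). *)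

theory Defs
  imports Complex_Main "HOL-Library.FuncSet"
begin

definition nonarch_abs :: "('a::field \<Rightarrow> real) \<Rightarrow> bool" where
  "nonarch_abs av \<longleftrightarrow>
     (\<forall>x. 0 \<le> av x) \<and> (\<forall>x. av x = 0 \<longleftrightarrow> x = 0) \<and>
     (\<forall>x y. av (x * y) = av x * av y) \<and>
     (\<forall>x y. av (x + y) \<le> max (av x) (av y))"

definition intring :: "('a::field \<Rightarrow> real) \<Rightarrow> 'a set" where
  "intring av = {x. av x \<le> 1}"

definition red :: "('a::field \<Rightarrow> real) \<Rightarrow> 'a \<Rightarrow> 'a set" where
  "red av x = {y \<in> intring av. av (x - y) < 1}"

definition resfield :: "('a::field \<Rightarrow> real) \<Rightarrow> 'a set set" where
  "resfield av = red av ` intring av"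

text \<open>Local field: complete w.r.t. a nontrivial discrete nonarchimedean absolute
  value with finite residue field.\<close>

definition local_field :: "('a::field \<Rightarrow> real) \<Rightarrow> bool" where
  "local_field av \<longleftrightarrow>
     nonarch_abs av \<and>
     (\<exists>x. x \<noteq> 0 \<and> av x \<noteq> 1) \<and>
     (\<forall>t \<in> av ` (UNIV - {0}). \<exists>\<epsilon>>0. \<forall>s \<in> av ` (UNIV - {0}). \<bar>s - t\<bar> < \<epsilon> \<longrightarrow> s = t) \<and>
     (\<forall>X::nat \<Rightarrow> 'a. (\<forall>\<epsilon>>0. \<exists>N. \<forall>m\<ge>N. \<forall>n\<ge>N. av (X m - X n) < \<epsilon>) \<longrightarrow>
         (\<exists>L. \<forall>\<epsilon>>0. \<exists>N. \<forall>n\<ge>N. av (X n - L) < \<epsilon>)) \<and>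
     finite (resfield av)"

text \<open>Continuous functions O -> K (only values on O matter).\<close>

definition cont_O :: "('a::field \<Rightarrow> real) \<Rightarrow> ('a \<Rightarrow> 'a) \<Rightarrow> bool" where
  "cont_O av f \<longleftrightarrow> (\<forall>x \<in> intring av. \<forall>\<epsilon>>0. \<exists>\<delta>>0. \<forall>y \<in> intring av.
       av (y - x) < \<delta> \<longrightarrow> av (f y - f x) < \<epsilon>)"

definition supnorm :: "('a::field \<Rightarrow> real) \<Rightarrow> ('a \<Rightarrow> 'a) \<Rightarrow> real" where
  "supnorm av f = (SUP x \<in> intring av. av (f x))"

definition orthonormal_basis :: "('a::field \<Rightarrow> real) \<Rightarrow> (nat \<Rightarrow> 'a \<Rightarrow> 'a) \<Rightarrow> bool" where
  "orthonormal_basis av b \<longleftrightarrow>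
     (\<forall>n. cont_O av (b n)) \<and>
     (\<forall>f. cont_O av f \<longrightarrow>
        (\<exists>c::nat \<Rightarrow> 'a. (\<lambda>n. av (c n)) \<longlonglongrightarrow> 0 \<and>
           (\<lambda>N. supnorm av (\<lambda>x. f x - (\<Sum>n<N. c n * b n x))) \<longlonglongrightarrow> 0 \<and>
           supnorm av f = (SUP n. av (c n))))"

definition open_subgroup_O :: "('a::field \<Rightarrow> real) \<Rightarrow> 'a set \<Rightarrow> bool" where
  "open_subgroup_O av H \<longleftrightarrow> H \<subseteq> intring av \<and> 0 \<in> H \<and>
     (\<forall>x\<in>H. \<forall>y\<in>H. x + y \<in> H \<and> - x \<in> H) \<and>
     (\<forall>x\<in>H. \<exists>r>0. \<forall>y \<in> intring av. av (y - x) < r \<longrightarrow> y \<in> H)"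

definition cosets_O :: "('a::field \<Rightarrow> real) \<Rightarrow> 'a set \<Rightarrow> 'a set set" where
  "cosets_O av H = intring av // {(x, y). x \<in> intring av \<and> y \<in> intring av \<and> x - y \<in> H}"

text \<open>Induced map O/H_n -> F^n (well defined under the constancy hypothesis).\<close>

definition induced_map :: "('a::field \<Rightarrow> real) \<Rightarrow> (nat \<Rightarrow> 'a \<Rightarrow> 'a) \<Rightarrow> nat \<Rightarrow> 'a set \<Rightarrow> (nat \<Rightarrow> 'a set)" where
  "induced_map av e n C = (\<lambda>j \<in> {..<n}. red av (e j (SOME x. x \<in> C)))"

text \<open>Extension by q-digits: f_i = prod_j e_j^(j-th base-q digit of i).
  Digits beyond the length of i are 0 and contribute e_j^0 = 1.\<close>

definition digit_ext :: "nat \<Rightarrow> (nat \<Rightarrow> 'a \<Rightarrow> 'a::field) \<Rightarrow> nat \<Rightarrow> 'a \<Rightarrow> 'a" where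
  "digit_ext q e i x = (\<Prod>j<i. e j x ^ ((i div q ^ j) mod q))"

end

(*
  The reductions of f_0, ..., f_(q^n - 1) are q^n functions on O that are constant on the cosets
  of H_n. They span all such functions: the indicator of a coset is a product over j < n of
  Lagrange polynomials of degree < q in e_j, and expanding the product along base-q digits
  writes it as a combination of the f_i. Since O/H_n has q^n elements and the residue field is
  finite, counting turns spanning into linear independence over the residue field, which in
  ultrametric terms says that a finite combination has sup norm equal to its largest coefficient.
  A continuous function is uniformly close to constant on the cosets of some H_n, so iterating
  the spanning statement with powers of a uniformizer approximates it arbitrarily well; by
  orthonormality the coefficients of the approximants converge, and their limits give the
  expansion.
*)

theory Submission
  imports Defs "HOL-Computational_Algebra.Polynomial" "HOL-Library.Diagonal_Subsequence"
begin

lemma sum_lessThan_support: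
  fixes a g :: "nat \<Rightarrow> 'b::semiring_0"
  assumes "\<And>i. i \<ge> N \<Longrightarrow> a i = 0" "N \<le> M"
  shows "(\<Sum>i<M. a i * g i) = (\<Sum>i<N. a i * g i)"
proof (rule sum.mono_neutral_right)
  show "\<forall>i\<in>{..<M} - {..<N}. a i * g i = 0"
    using assms(1) by simp
qed (use assms(2) in auto)

lemma sum_lessThan_max_add:
  fixes a b g :: "nat \<Rightarrow> 'b::semiring_0"
  assumes "\<And>i. i \<ge> N \<Longrightarrow> a i = 0" "\<And>i. i \<ge> N' \<Longrightarrow> b i = 0"
  shows "(\<Sum>i<max N N'. (a i + b i) * g i) = (\<Sum>i<N. a i * g i) + (\<Sum>i<N'. b i * g i)"
  using sum_lessThan_support[of N a "max N N'" g] sum_lessThan_support[of N' b "max N N'" g] assms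
  by (simp add: distrib_right sum.distrib)

lemma le_if_le_max_power:
  fixes r y z :: real
  assumes "r < 1" "0 \<le> z" "\<And>k. y \<le> max (r ^ k) z"
  shows "y \<le> z"
proof (rule ccontr)
  assume "\<not> y \<le> z"
  then obtain k where "r ^ k < y"
    using real_arch_pow_inv[of y r] assms(1,2) by auto
  with assms(3)[of k] \<open>\<not> y \<le> z\<close> show False
    by linarith
qed

lemma LIMSEQ_zero_if_le_power:
  fixes r :: real and s :: "nat \<Rightarrow> real"
  assumes "r < 1" "\<And>k. \<exists>N. \<forall>n\<ge>N. 0 \<le> s n \<and> s n \<le> r ^ k"
  shows "s \<longlonglongrightarrow> 0"
proof (rule LIMSEQ_I)
  fix \<epsilon> :: real
  assume "\<epsilon> > 0"
  then obtain k where "r ^ k < \<epsilon>"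
    using real_arch_pow_inv assms(1) by blast
  moreover obtain N where "\<forall>n\<ge>N. 0 \<le> s n \<and> s n \<le> r ^ k"
    using assms(2) by blast
  ultimately show "\<exists>N. \<forall>n\<ge>N. norm (s n - 0) < \<epsilon>"
    by (metis abs_of_nonneg diff_zero le_less_trans real_norm_def)
qed

section \<open>Base-q digit expansions\<close>

lemma prod_sum_digits:
  fixes g :: "nat \<Rightarrow> nat \<Rightarrow> 'b::comm_semiring_1"
  shows "(\<Prod>j<n. \<Sum>k<q. g j k) = (\<Sum>i<q ^ n. \<Prod>j<n. g j (i div q ^ j mod q))"
proof (induction n arbitrary: g)
  case 0
  then show ?case
    by simp
next
  case (Suc n)
  have digit_Suc: "(k + i * q) div q ^ Suc j mod q = i div q ^ j mod q" if "k < q" for i j k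
  proof -
    have "(k + i * q) div q = i"
      using that by simp
    then show ?thesis
      by (simp add: div_mult2_eq)
  qed
  define G where "G i = (\<Prod>j<Suc n. g j (i div q ^ j mod q))" for i
  have "(\<Prod>j<Suc n. \<Sum>k<q. g j k) = (\<Sum>k<q. g 0 k) * (\<Prod>j<n. \<Sum>k<q. g (Suc j) k)"
    by (simp only: prod.lessThan_Suc_shift)
  also have "\<dots> = (\<Sum>i<q ^ n. \<Sum>k<q. g 0 k * (\<Prod>j<n. g (Suc j) (i div q ^ j mod q)))"
    by (simp add: Suc sum_product sum.swap[of _ "{..<q}"])
  also have "\<dots> = (\<Sum>i<q ^ n. \<Sum>k<q. \<Prod>j<Suc n. g j ((k + i * q) div q ^ j mod q))"
    by (intro sum.cong refl, simp only: prod.lessThan_Suc_shift) (simp add: digit_Suc del: power_Suc)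
  also have "\<dots> = (\<Sum>i<q ^ n. sum G {i * q..<i * q + q})"
    using sum.shift_bounds_nat_ivl[of G 0 "_ * q" q] by (simp add: G_def atLeast0LessThan add.commute)
  also have "\<dots> = (\<Sum>i<q ^ Suc n. G i)"
    by (simp add: sum.nat_group mult.commute)
  finally show ?case
    by (simp add: G_def)
qed

lemma digit_ext_eq_prod:
  assumes "q \<ge> 2" "i < q ^ n"
  shows "digit_ext q e i x = (\<Prod>j<n. e j x ^ (i div q ^ j mod q))"
proof -
  have high_digit: "e j x ^ (i div q ^ j mod q) = 1" if "j \<ge> i \<or> j \<ge> n" for j
  proof -
    have "i < q ^ j"
    proof (cases "j \<ge> n")
      case True
      have "q ^ n \<le> q ^ j"
        using assms(1) True by (intro power_increasing) simp_all
      with assms(2) show ?thesis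
        by linarith
    next
      case False
      with that have "j \<ge> i"
        by simp
      have "i < 2 ^ i"
        by (rule less_exp)
      also have "\<dots> \<le> 2 ^ j"
        using \<open>j \<ge> i\<close> by (intro power_increasing) simp_all
      also have "\<dots> \<le> q ^ j"
        using assms(1) by (intro power_mono) simp_all
      finally show ?thesis .
    qed
    then show ?thesis
      by simp
  qed
  have "digit_ext q e i x = (\<Prod>j<max i n. e j x ^ (i div q ^ j mod q))"
    unfolding digit_ext_def by (intro prod.mono_neutral_left) (auto intro: high_digit)
  also have "\<dots> = (\<Prod>j<n. e j x ^ (i div q ^ j mod q))"
    by (intro prod.mono_neutral_right) (auto intro: high_digit)
  finally show ?thesis .
qed

locale nonarch_valued_field =
  fixes av :: "'a::field \<Rightarrow> real"
  assumes nonarch_abs: "nonarch_abs av"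
begin

lemma av_nonneg [simp]: "0 \<le> av x"
  and av_eq_0_iff [simp]: "av x = 0 \<longleftrightarrow> x = 0"
  and av_mult: "av (x * y) = av x * av y"
  and av_add: "av (x + y) \<le> max (av x) (av y)"
  using nonarch_abs unfolding nonarch_abs_def by blast+

lemma av_0 [simp]: "av 0 = 0"
  by simp

lemma av_pos_iff [simp]: "0 < av x \<longleftrightarrow> x \<noteq> 0"
  using av_nonneg[of x] av_eq_0_iff[of x] by linarith

lemma av_1 [simp]: "av 1 = 1"
  using av_mult[of 1 1] by simp

lemma av_minus [simp]: "av (- x) = av x"
proof -
  have "av (-1) * av (-1) = 1"
    using av_mult[of "-1" "-1"] by simp
  then have "av (-1) = 1"
    using av_nonneg[of "-1"] by (auto simp: square_eq_1_iff)
  then show ?thesis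
    using av_mult[of "-1" x] by simp
qed

lemma av_minus_commute: "av (x - y) = av (y - x)"
  by (metis av_minus minus_diff_eq)

lemma av_inverse: "av (inverse x) = inverse (av x)"
proof (cases "x = 0")
  case False
  then have "av x * av (inverse x) = 1"
    by (simp add: av_mult[symmetric])
  then show ?thesis
    by (rule inverse_unique[symmetric])
qed simp

lemma av_divide: "av (x / y) = av x / av y"
  by (simp add: divide_inverse av_mult av_inverse)

lemma av_power: "av (x ^ n) = av x ^ n"
  by (induction n) (simp_all add: av_mult)

lemma av_prod: "av (prod g A) = (\<Prod>i\<in>A. av (g i))"
  by (induction A rule: infinite_finite_induct) (simp_all add: av_mult)

lemma av_add_le: "av x \<le> B \<Longrightarrow> av y \<le> B \<Longrightarrow> av (x + y) \<le> B"
  and av_add_less: "av x < B \<Longrightarrow> av y < B \<Longrightarrow> av (x + y) < B"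
  using av_add[of x y] by simp_all

lemma av_diff_le: "av x \<le> B \<Longrightarrow> av y \<le> B \<Longrightarrow> av (x - y) \<le> B"
  using av_add[of x "- y"] by simp

lemma av_diff_trans_le: "av (x - y) \<le> B \<Longrightarrow> av (y - z) \<le> B \<Longrightarrow> av (x - z) \<le> B"
  and av_diff_trans_less: "av (x - y) < B \<Longrightarrow> av (y - z) < B \<Longrightarrow> av (x - z) < B"
  using av_add[of "x - y" "y - z"] by simp_all

lemma av_sum_le: "0 \<le> B \<Longrightarrow> (\<And>i. i \<in> A \<Longrightarrow> av (g i) \<le> B) \<Longrightarrow> av (sum g A) \<le> B"
  by (induction A rule: infinite_finite_induct) (auto intro!: av_add_le)

lemma av_sum_less: "0 < B \<Longrightarrow> (\<And>i. i \<in> A \<Longrightarrow> av (g i) < B) \<Longrightarrow> av (sum g A) < B"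
  by (induction A rule: infinite_finite_induct) (auto intro!: av_add_less)

lemma av_mult_le: "av x \<le> 1 \<Longrightarrow> av y \<le> B \<Longrightarrow> av (x * y) \<le> B"
  by (simp add: av_mult mult_le_one) (metis av_nonneg mult_left_le_one_le order.trans)

lemma av_mult_less: "av x \<le> 1 \<Longrightarrow> av y < B \<Longrightarrow> av (x * y) < B"
  by (simp add: av_mult) (metis av_nonneg le_less_trans mult_left_le_one_le)

end

section \<open>Local fields\<close>

locale local_valued_field =
  fixes av :: "'a::field \<Rightarrow> real"
  assumes local_field: "local_field av"

sublocale local_valued_field \<subseteq> nonarch_valued_field
  using local_field unfolding local_field_def by unfold_locales blast

context local_valued_field
begin

abbreviation \<O> :: "'a set" where "\<O> \<equiv> intring av"

abbreviation q :: nat where "q \<equiv> card (resfield av)"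

lemma in_O_iff: "x \<in> \<O> \<longleftrightarrow> av x \<le> 1"
  by (simp add: intring_def)

lemma zero_in_O [simp]: "0 \<in> \<O>" and one_in_O [simp]: "1 \<in> \<O>"
  by (simp_all add: in_O_iff)

lemma O_diff: "x \<in> \<O> \<Longrightarrow> y \<in> \<O> \<Longrightarrow> x - y \<in> \<O>"
  and O_mult: "x \<in> \<O> \<Longrightarrow> y \<in> \<O> \<Longrightarrow> x * y \<in> \<O>"
  by (simp_all add: in_O_iff av_diff_le av_mult_le)

lemma O_sum: "(\<And>i. i \<in> A \<Longrightarrow> g i \<in> \<O>) \<Longrightarrow> sum g A \<in> \<O>"
  by (simp add: in_O_iff av_sum_le)

lemma O_prod: "(\<And>i. i \<in> A \<Longrightarrow> g i \<in> \<O>) \<Longrightarrow> prod g A \<in> \<O>"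
  by (induction A rule: infinite_finite_induct) (simp_all add: O_mult)

lemma O_power: "x \<in> \<O> \<Longrightarrow> x ^ n \<in> \<O>"
  using O_prod[of "{..<n}" "\<lambda>_. x"] by simp

lemma in_O_if_close: "y \<in> \<O> \<Longrightarrow> av (y - x) < 1 \<Longrightarrow> x \<in> \<O>"
  using av_diff_le[of y 1 "y - x"] by (simp add: in_O_iff)

lemma av_Cauchy_convergent:
  fixes X :: "nat \<Rightarrow> 'a"
  assumes "\<forall>\<epsilon>>0. \<exists>N. \<forall>m\<ge>N. \<forall>n\<ge>N. av (X m - X n) < \<epsilon>"
  shows "\<exists>L. \<forall>\<epsilon>>0. \<exists>N. \<forall>n\<ge>N. av (X n - L) < \<epsilon>"
proof -
  have "\<forall>X::nat \<Rightarrow> 'a. (\<forall>\<epsilon>>0. \<exists>N. \<forall>m\<ge>N. \<forall>n\<ge>N. av (X m - X n) < \<epsilon>) \<longrightarrow>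
      (\<exists>L. \<forall>\<epsilon>>0. \<exists>N. \<forall>n\<ge>N. av (X n - L) < \<epsilon>)"
    using local_field unfolding local_field_def by blast
  from spec[OF this, of X] assms show ?thesis
    by (rule mp)
qed

lemma finite_resfield: "finite (resfield av)"
  using local_field unfolding local_field_def by blast

lemma red_in_resfield: "x \<in> \<O> \<Longrightarrow> red av x \<in> resfield av"
  by (simp add: resfield_def)

lemma red_eq_iff: "x \<in> \<O> \<Longrightarrow> y \<in> \<O> \<Longrightarrow> red av x = red av y \<longleftrightarrow> av (x - y) < 1"
  unfolding red_def set_eq_iff mem_Collect_eq
  by (metis av_diff_trans_less av_minus_commute diff_self av_0 zero_less_one)

lemma q_ge_2: "q \<ge> 2"
proof -
  have "red av 0 \<noteq> red av 1"
    by (simp add: red_eq_iff)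
  then have "card {red av 0, red av 1} \<le> q"
    by (intro card_mono finite_resfield) (auto simp: red_in_resfield)
  with \<open>red av 0 \<noteq> red av 1\<close> show ?thesis
    by simp
qed

lemma less_q_power: "N < q ^ N"
proof -
  have "N < 2 ^ N"
    by (rule less_exp)
  also have "\<dots> \<le> q ^ N"
    using q_ge_2 by (intro power_mono) simp_all
  finally show ?thesis .
qed

lemma uniformizer_exists: "\<exists>p. 0 < av p \<and> av p < 1 \<and> (\<forall>y. av y < 1 \<longrightarrow> av y \<le> av p)"
proof -
  have "\<forall>t \<in> av ` (UNIV - {0}). \<exists>\<epsilon>>0. \<forall>s \<in> av ` (UNIV - {0}). \<bar>s - t\<bar> < \<epsilon> \<longrightarrow> s = t"
    using local_field unfolding local_field_def by blast
  moreover have "1 \<in> av ` (UNIV - {0})"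
    by (metis DiffI av_1 image_eqI UNIV_I one_neq_zero singletonD)
  ultimately obtain \<epsilon> where "\<epsilon> > 0" and discrete: "\<And>x. x \<noteq> 0 \<Longrightarrow> \<bar>av x - 1\<bar> < \<epsilon> \<Longrightarrow> av x = 1"
    by fastforce
  obtain x0 where "x0 \<noteq> 0" "av x0 \<noteq> 1"
    using local_field unfolding local_field_def by blast
  then obtain p0 where "p0 \<noteq> 0" "av p0 < 1"
    by (metis av_inverse inverse_nonzero_iff_nonzero inverse_less_1_iff linorder_neqE_linordered_idom)
  \<comment> \<open>No value lies in (1, 1 + \<epsilon>), so a value above Sup V / (1 + \<epsilon>) is the largest one below 1.\<close>
  define V where "V = {av x | x. x \<noteq> 0 \<and> av x < 1}"
  have "av p0 \<in> V" "bdd_above V"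
    using \<open>p0 \<noteq> 0\<close> \<open>av p0 < 1\<close> unfolding V_def by (auto intro: bdd_aboveI[of _ 1])
  define m where "m = Sup V"
  have "av p0 \<le> m"
    unfolding m_def by (rule cSup_upper) fact+
  then have "0 < m"
    using \<open>p0 \<noteq> 0\<close> by (meson av_pos_iff less_le_trans)
  then have "m / (1 + \<epsilon>) < m"
    using \<open>\<epsilon> > 0\<close> by (simp add: divide_less_eq)
  then obtain p where "p \<noteq> 0" "av p < 1" "m / (1 + \<epsilon>) < av p"
    using less_cSup_iff[of V] \<open>av p0 \<in> V\<close> \<open>bdd_above V\<close> unfolding m_def V_def by blast
  have "av y \<le> av p" if "av y < 1" for y
  proof (rule ccontr)
    assume "\<not> av y \<le> av p"
    then have "y \<noteq> 0" "1 < av (y / p)"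
      using \<open>p \<noteq> 0\<close> by (auto simp: av_divide)
    moreover have "av y \<le> m"
      unfolding m_def using \<open>y \<noteq> 0\<close> \<open>av y < 1\<close> \<open>bdd_above V\<close> by (intro cSup_upper) (auto simp: V_def)
    then have "av (y / p) < 1 + \<epsilon>"
      using \<open>m / (1 + \<epsilon>) < av p\<close> \<open>p \<noteq> 0\<close> \<open>\<epsilon> > 0\<close>
      by (simp add: av_divide divide_less_eq mult.commute)
    ultimately show False
      using discrete[of "y / p"] \<open>p \<noteq> 0\<close> by auto
  qed
  with \<open>p \<noteq> 0\<close> \<open>av p < 1\<close> show ?thesis
    by (auto intro!: exI[of _ p])
qed

definition unif :: 'a where
  "unif = (SOME p. 0 < av p \<and> av p < 1 \<and> (\<forall>y. av y < 1 \<longrightarrow> av y \<le> av p))"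

abbreviation \<rho> :: real where "\<rho> \<equiv> av unif"

lemma unif_pos: "0 < \<rho>" and unif_less_1: "\<rho> < 1" and av_le_unif: "av y < 1 \<Longrightarrow> av y \<le> \<rho>"
  using someI_ex[OF uniformizer_exists] unfolding unif_def[symmetric] by blast+

lemma unif_nonzero: "unif \<noteq> 0"
  using unif_pos by auto

definition lift :: "'a set \<Rightarrow> 'a" where
  "lift C = (SOME y. y \<in> C)"

lemma lift_in_class: "C \<in> resfield av \<Longrightarrow> lift C \<in> C"
  unfolding lift_def resfield_def red_def by (rule someI_ex) (auto intro: exI[of _ "_ :: 'a"])

lemma lift_in_O: "C \<in> resfield av \<Longrightarrow> lift C \<in> \<O>"
  using lift_in_class unfolding resfield_def red_def by blast

lemma av_lift_red_diff: "x \<in> \<O> \<Longrightarrow> av (lift (red av x) - x) < 1"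
  using lift_in_class[OF red_in_resfield] av_minus_commute unfolding red_def by fastforce

lemma red_lift: "C \<in> resfield av \<Longrightarrow> red av (lift C) = C"
  unfolding resfield_def
  using red_eq_iff lift_in_O av_lift_red_diff red_in_resfield by blast

lemma av_lift_diff:
  assumes "C \<in> resfield av" "D \<in> resfield av" "C \<noteq> D"
  shows "av (lift C - lift D) = 1"
proof -
  have "av (lift C - lift D) \<le> 1"
    using assms lift_in_O O_diff in_O_iff by blast
  moreover have "\<not> av (lift C - lift D) < 1"
    using assms red_eq_iff[of "lift C" "lift D"] by (simp add: lift_in_O red_lift)
  ultimately show ?thesis
    by simp
qed

subsection \<open>Sequential compactness of the ring of integers\<close>

lemma subseq_diam_refine:
  fixes Y :: "nat \<Rightarrow> 'a"
  assumes diam: "\<And>m n. av (Y m - Y n) \<le> \<rho> ^ k"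
  shows "\<exists>r::nat \<Rightarrow> nat. strict_mono r \<and> (\<forall>m n. av (Y (r m) - Y (r n)) \<le> \<rho> ^ Suc k)"
proof -
  define z where "z n = (Y n - Y 0) / unif ^ k" for n
  have "z n \<in> \<O>" for n
    using diam[of n 0] unif_pos by (simp add: z_def in_O_iff av_divide av_power)
  then have "range (\<lambda>n. red av (z n)) \<subseteq> resfield av"
    using red_in_resfield by blast
  then have "finite (range (\<lambda>n. red av (z n)))"
    using finite_resfield finite_subset by blast
  then obtain n0 where inf: "infinite {n. red av (z n) = red av (z n0)}"
    using pigeonhole_infinite[of UNIV] by auto
  define r where "r = enumerate {n. red av (z n) = red av (z n0)}"
  have "strict_mono r"
    unfolding r_def using inf by (rule strict_mono_enumerate)
  moreover have "av (Y (r m) - Y (r n)) \<le> \<rho> ^ Suc k" for m n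
  proof -
    have "red av (z (r m)) = red av (z (r n))"
      using enumerate_in_set[OF inf] unfolding r_def by simp
    then have "av (z (r m) - z (r n)) \<le> \<rho>"
      using red_eq_iff \<open>\<And>n. z n \<in> \<O>\<close> av_le_unif by blast
    moreover have "z (r m) - z (r n) = (Y (r m) - Y (r n)) / unif ^ k"
      by (simp add: z_def diff_divide_distrib)
    ultimately show ?thesis
      using unif_pos by (simp add: av_divide av_power divide_le_eq mult.commute)
  qed
  ultimately show ?thesis
    by blast
qed

lemma subseq_diam_exists:
  fixes X :: "nat \<Rightarrow> 'a"
  assumes "\<And>n. X n \<in> \<O>"
  shows "\<exists>r::nat \<Rightarrow> nat. strict_mono r \<and> (\<forall>m n. av (X (s (r m)) - X (s (r n))) \<le> \<rho> ^ k)"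
proof (induction k)
  case 0
  have "strict_mono id"
    by (simp add: strict_mono_def)
  moreover have "av (X (s m) - X (s n)) \<le> 1" for m n
    using assms by (simp add: in_O_iff av_diff_le)
  ultimately have "strict_mono id \<and> (\<forall>m n. av (X (s (id m)) - X (s (id n))) \<le> \<rho> ^ 0)"
    by simp
  then show ?case
    by blast
next
  case (Suc k)
  then obtain r :: "nat \<Rightarrow> nat" where "strict_mono r" "\<And>m n. av (X (s (r m)) - X (s (r n))) \<le> \<rho> ^ k"
    by blast
  moreover obtain r' :: "nat \<Rightarrow> nat" where "strict_mono r'" "\<forall>m n. av (X (s (r (r' m))) - X (s (r (r' n)))) \<le> \<rho> ^ Suc k"
    using subseq_diam_refine[of "\<lambda>n. X (s (r n))"] calculation(2) by blast
  moreover have "strict_mono (r \<circ> r')"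
    using calculation by (simp add: strict_mono_o)
  ultimately show ?case
    by (intro exI[of _ "r \<circ> r'"]) (simp add: o_def)
qed

lemma O_seq_compact:
  fixes X :: "nat \<Rightarrow> 'a"
  assumes "\<And>n. X n \<in> \<O>"
  shows "\<exists>(r::nat \<Rightarrow> nat) L. strict_mono r \<and> L \<in> \<O> \<and> (\<forall>\<epsilon>>0. \<exists>N. \<forall>n\<ge>N. av (X (r n) - L) < \<epsilon>)"
proof -
  interpret subseqs "\<lambda>k s. \<forall>m n. av (X (s m) - X (s n)) \<le> \<rho> ^ k"
    using subseq_diam_exists[OF assms] by unfold_locales simp
  have "\<exists>L. \<forall>\<epsilon>>0. \<exists>N. \<forall>n\<ge>N. av (X (diagseq n) - L) < \<epsilon>"
  proof (rule av_Cauchy_convergent, intro allI impI)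
    fix \<epsilon> :: real
    assume "\<epsilon> > 0"
    then obtain k where "\<rho> ^ k < \<epsilon>"
      using real_arch_pow_inv unif_less_1 by blast
    have diam: "\<forall>i j. av (X (diagseq (Suc k + i)) - X (diagseq (Suc k + j))) \<le> \<rho> ^ k"
      using diagseq_holds[of k] by simp
    have "av (X (diagseq m) - X (diagseq n)) < \<epsilon>" if "m \<ge> Suc k" "n \<ge> Suc k" for m n
      using spec[OF spec[OF diam, of "m - Suc k"], of "n - Suc k"] that \<open>\<rho> ^ k < \<epsilon>\<close> by simp
    then show "\<exists>N. \<forall>m\<ge>N. \<forall>n\<ge>N. av (X (diagseq m) - X (diagseq n)) < \<epsilon>"
      by blast
  qed
  then obtain L where L: "\<forall>\<epsilon>>0. \<exists>N. \<forall>n\<ge>N. av (X (diagseq n) - L) < \<epsilon>"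
    by blast
  then obtain N where "av (X (diagseq N) - L) < 1"
    by (meson order_refl zero_less_one)
  then have "L \<in> \<O>"
    using assms in_O_if_close by blast
  with L subseq_diagseq show ?thesis
    by blast
qed

lemma cont_O_dominated:
  assumes f: "cont_O av f" and g: "cont_O av g"
    and dom: "\<And>x y. x \<in> \<O> \<Longrightarrow> y \<in> \<O> \<Longrightarrow> av (h y - h x) \<le> C * max (av (f y - f x)) (av (g y - g x))"
  shows "cont_O av h"
  unfolding cont_O_def
proof (intro ballI allI impI)
  fix x and \<epsilon> :: real
  assume "x \<in> \<O>" "\<epsilon> > 0"
  define \<epsilon>' where "\<epsilon>' = \<epsilon> / (\<bar>C\<bar> + 1)"
  have "\<epsilon>' > 0"
    using \<open>\<epsilon> > 0\<close> by (simp add: \<epsilon>'_def)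
  obtain d1 where "d1 > 0" and d1: "\<forall>y\<in>\<O>. av (y - x) < d1 \<longrightarrow> av (f y - f x) < \<epsilon>'"
    using f \<open>x \<in> \<O>\<close> \<open>\<epsilon>' > 0\<close> unfolding cont_O_def by blast
  obtain d2 where "d2 > 0" and d2: "\<forall>y\<in>\<O>. av (y - x) < d2 \<longrightarrow> av (g y - g x) < \<epsilon>'"
    using g \<open>x \<in> \<O>\<close> \<open>\<epsilon>' > 0\<close> unfolding cont_O_def by blast
  have "av (h y - h x) < \<epsilon>" if "y \<in> \<O>" "av (y - x) < min d1 d2" for y
  proof -
    have "av (h y - h x) \<le> C * max (av (f y - f x)) (av (g y - g x))"
      using \<open>x \<in> \<O>\<close> \<open>y \<in> \<O>\<close> by (rule dom)
    also have "\<dots> \<le> \<bar>C\<bar> * max (av (f y - f x)) (av (g y - g x))"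
      by (intro mult_right_mono) (auto simp: le_max_iff_disj)
    also have "\<dots> \<le> \<bar>C\<bar> * \<epsilon>'"
      using that d1 d2 by (intro mult_left_mono) auto
    also have "\<dots> < \<epsilon>"
      using \<open>\<epsilon> > 0\<close> by (simp add: \<epsilon>'_def field_simps)
    finally show ?thesis .
  qed
  with \<open>d1 > 0\<close> \<open>d2 > 0\<close> show "\<exists>\<delta>>0. \<forall>y\<in>\<O>. av (y - x) < \<delta> \<longrightarrow> av (h y - h x) < \<epsilon>"
    by (intro exI[of _ "min d1 d2"]) auto
qed

lemma cont_O_const: "cont_O av (\<lambda>x. c)"
  unfolding cont_O_def by (auto intro: exI[of _ 1])

lemma cont_O_add: "cont_O av f \<Longrightarrow> cont_O av g \<Longrightarrow> cont_O av (\<lambda>x. f x + g x)"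
  by (rule cont_O_dominated[where C = 1 and f = f and g = g]) (simp_all add: av_add_le add_diff_add)

lemma cont_O_cmult: "cont_O av f \<Longrightarrow> cont_O av (\<lambda>x. c * f x)"
  by (rule cont_O_dominated[where C = "av c" and f = f and g = f]) (simp_all add: av_mult[symmetric] right_diff_distrib)

lemma cont_O_diff: "cont_O av f \<Longrightarrow> cont_O av g \<Longrightarrow> cont_O av (\<lambda>x. f x - g x)"
  using cont_O_add[of f "\<lambda>x. - 1 * g x"] cont_O_cmult[of g "- 1"] by simp

lemma cont_O_mult:
  assumes "cont_O av f" "cont_O av g" "\<And>x. x \<in> \<O> \<Longrightarrow> f x \<in> \<O>" "\<And>x. x \<in> \<O> \<Longrightarrow> g x \<in> \<O>"
  shows "cont_O av (\<lambda>x. f x * g x)"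
proof (rule cont_O_dominated[where C = 1, OF assms(1,2)])
  fix x y
  assume "x \<in> \<O>" "y \<in> \<O>"
  then have "av (f y * (g y - g x)) \<le> av (g y - g x)" "av (g x * (f y - f x)) \<le> av (f y - f x)"
    using assms(3,4) by (simp_all add: in_O_iff av_mult_le)
  then have "av (f y * (g y - g x) + g x * (f y - f x)) \<le> max (av (f y - f x)) (av (g y - g x))"
    by (intro av_add_le) (simp_all add: le_max_iff_disj)
  then show "av (f y * g y - f x * g x) \<le> 1 * max (av (f y - f x)) (av (g y - g x))"
    by (simp add: algebra_simps)
qed

lemma cont_O_sum: "(\<And>i. i \<in> A \<Longrightarrow> cont_O av (f i)) \<Longrightarrow> cont_O av (\<lambda>x. \<Sum>i\<in>A. f i x)"
  by (induction A rule: infinite_finite_induct) (simp_all add: cont_O_const cont_O_add)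

lemma cont_O_prod:
  "(\<And>i. i \<in> A \<Longrightarrow> cont_O av (f i)) \<Longrightarrow> (\<And>i x. i \<in> A \<Longrightarrow> x \<in> \<O> \<Longrightarrow> f i x \<in> \<O>)
    \<Longrightarrow> cont_O av (\<lambda>x. \<Prod>i\<in>A. f i x)"
  by (induction A rule: infinite_finite_induct) (simp_all add: cont_O_const cont_O_mult O_prod)

lemma cont_O_bounded:
  assumes f: "cont_O av f"
  shows "\<exists>B. \<forall>x\<in>\<O>. av (f x) \<le> B"
proof (rule ccontr)
  assume "\<not> ?thesis"
  then have "\<forall>n::nat. \<exists>x\<in>\<O>. real n < av (f x)"
    by (meson not_le)
  then obtain X where X: "\<And>n. X n \<in> \<O>" "\<And>n. real n < av (f (X n))"
    by metis
  obtain r :: "nat \<Rightarrow> nat" and L where "strict_mono r" "L \<in> \<O>"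
    and lim: "\<forall>\<epsilon>>0. \<exists>N. \<forall>n\<ge>N. av (X (r n) - L) < \<epsilon>"
    using O_seq_compact[of X, OF X(1)] by blast
  obtain d where "d > 0" and d: "\<forall>y\<in>\<O>. av (y - L) < d \<longrightarrow> av (f y - f L) < 1"
    using f \<open>L \<in> \<O>\<close> unfolding cont_O_def by (meson zero_less_one)
  obtain N where N: "\<forall>n\<ge>N. av (X (r n) - L) < d"
    using lim \<open>d > 0\<close> by blast
  define n where "n = max N (nat \<lceil>max 1 (av (f L))\<rceil>)"
  have "av (f (X (r n)) - f L) < 1"
    using d N X(1) by (simp add: n_def)
  then have "av (f (X (r n))) \<le> max 1 (av (f L))"
    using av_add[of "f (X (r n)) - f L" "f L"] by simp
  moreover have "max 1 (av (f L)) \<le> real n"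
    unfolding n_def by linarith
  moreover have "n \<le> r n"
    using \<open>strict_mono r\<close> by (rule seq_suble)
  ultimately show False
    using X(2)[of "r n"] by linarith
qed

lemma cont_O_uniform:
  assumes f: "cont_O av f" and "\<epsilon> > 0"
  shows "\<exists>\<delta>>0. \<forall>x\<in>\<O>. \<forall>y\<in>\<O>. av (x - y) < \<delta> \<longrightarrow> av (f x - f y) < \<epsilon>"
proof (rule ccontr)
  assume "\<not> ?thesis"
  moreover have "\<forall>n::nat. inverse (Suc n) > 0"
    by simp
  ultimately have "\<forall>n::nat. \<exists>x\<in>\<O>. \<exists>y\<in>\<O>. av (x - y) < inverse (Suc n) \<and> \<not> av (f x - f y) < \<epsilon>"
    by blast
  then obtain X Y where XY: "\<forall>n. X n \<in> \<O> \<and> Y n \<in> \<O> \<and> av (X n - Y n) < inverse (Suc n) \<and>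
      \<not> av (f (X n) - f (Y n)) < \<epsilon>"
    by metis
  then have X: "\<And>n. X n \<in> \<O>" and Y: "\<And>n. Y n \<in> \<O>"
    and close: "\<And>n. av (X n - Y n) < inverse (Suc n)" and far: "\<And>n. \<not> av (f (X n) - f (Y n)) < \<epsilon>"
    by blast+
  obtain r :: "nat \<Rightarrow> nat" and L where "strict_mono r" "L \<in> \<O>"
    and lim: "\<forall>\<epsilon>>0. \<exists>N. \<forall>n\<ge>N. av (X (r n) - L) < \<epsilon>"
    using O_seq_compact[of X, OF X] by blast
  obtain d where "d > 0" and d: "\<forall>y\<in>\<O>. av (y - L) < d \<longrightarrow> av (f y - f L) < \<epsilon>"
    using f \<open>L \<in> \<O>\<close> \<open>\<epsilon> > 0\<close> unfolding cont_O_def by blast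
  obtain N where N: "\<forall>n\<ge>N. av (X (r n) - L) < d"
    using lim \<open>d > 0\<close> by blast
  obtain M where M: "inverse (Suc M) < d"
    using reals_Archimedean \<open>d > 0\<close> by blast
  define n where "n = max N M"
  have "inverse (Suc (r n)) \<le> inverse (Suc M)"
    using seq_suble[OF \<open>strict_mono r\<close>, of n] by (simp add: n_def)
  then have "av (X (r n) - Y (r n)) < d"
    using close[of "r n"] M by linarith
  then have "av (Y (r n) - X (r n)) < d"
    by (simp add: av_minus_commute[of "Y (r n)"])
  moreover have "av (X (r n) - L) < d"
    using N by (simp add: n_def)
  ultimately have "av (Y (r n) - L) < d"
    by (rule av_diff_trans_less)
  then have "av (f L - f (Y (r n))) < \<epsilon>"
    using d Y av_minus_commute[of "f L"] by simp
  moreover have "av (f (X (r n)) - f L) < \<epsilon>"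
    using d X \<open>av (X (r n) - L) < d\<close> by blast
  ultimately show False
    using far[of "r n"] av_diff_trans_less by blast
qed

lemma supnorm_le:
  assumes "\<And>x. x \<in> \<O> \<Longrightarrow> av (g x) \<le> B"
  shows "supnorm av g \<le> B"
  unfolding supnorm_def
proof (rule cSUP_least)
  show "\<O> \<noteq> {}"
    using zero_in_O by blast
qed (rule assms)

lemma av_le_supnorm:
  assumes "\<And>x. x \<in> \<O> \<Longrightarrow> av (g x) \<le> B" "x \<in> \<O>"
  shows "av (g x) \<le> supnorm av g"
  unfolding supnorm_def using assms(2)
proof (rule cSUP_upper)
  show "bdd_above ((\<lambda>x. av (g x)) ` \<O>)"
    using assms(1) by (rule bdd_aboveI2)
qed

lemma supnorm_nonneg:
  assumes "\<And>x. x \<in> \<O> \<Longrightarrow> av (g x) \<le> B"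
  shows "0 \<le> supnorm av g"
  using av_nonneg[of "g 0"] av_le_supnorm[of g B 0, OF assms zero_in_O] by linarith

subsection \<open>Lagrange interpolation modulo the maximal ideal\<close>

lemma av_prod_diff_less:
  assumes "\<And>i. i \<in> A \<Longrightarrow> x i \<in> \<O>" "\<And>i. i \<in> A \<Longrightarrow> y i \<in> \<O>" "\<And>i. i \<in> A \<Longrightarrow> av (x i - y i) < 1"
  shows "av (prod x A - prod y A) < 1"
  using assms
proof (induction A rule: infinite_finite_induct)
  case (insert a A)
  have "prod y A \<in> \<O>"
    using insert.prems by (intro O_prod) auto
  then have "av (x a * (prod x A - prod y A)) < 1" "av ((x a - y a) * prod y A) < 1"
    using insert by (auto simp: in_O_iff av_mult_less mult.commute[of "x a - y a"])
  then have "av (x a * (prod x A - prod y A) + (x a - y a) * prod y A) < 1"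
    by (rule av_add_less)
  then show ?case
    using insert.hyps by (simp add: algebra_simps)
qed simp_all

lemma av_sum_mult_diff_less:
  assumes "\<And>i. i \<in> A \<Longrightarrow> w i \<in> \<O>" "\<And>i. i \<in> A \<Longrightarrow> av (u i - v i) < 1"
  shows "av ((\<Sum>i\<in>A. w i * u i) - (\<Sum>i\<in>A. w i * v i)) < 1"
proof -
  have "(\<Sum>i\<in>A. w i * u i) - (\<Sum>i\<in>A. w i * v i) = (\<Sum>i\<in>A. w i * (u i - v i))"
    by (simp add: sum_subtractf right_diff_distrib)
  also have "av \<dots> < 1"
    using assms by (intro av_sum_less) (simp_all add: in_O_iff av_mult_less)
  finally show ?thesis .
qed

definition lagrange :: "'a set \<Rightarrow> 'a poly" where
  "lagrange C = smult (inverse (\<Prod>D\<in>resfield av - {C}. lift C - lift D)) (\<Prod>D\<in>resfield av - {C}. [:- lift D, 1:])"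

lemma av_lagrange_denominator: "C \<in> resfield av \<Longrightarrow> av (\<Prod>D\<in>resfield av - {C}. lift C - lift D) = 1"
  unfolding av_prod by (intro prod.neutral) (auto intro: av_lift_diff)

lemma coeff_lagrange_in_O:
  assumes "C \<in> resfield av"
  shows "coeff (lagrange C) k \<in> \<O>"
proof -
  have "coeff (\<Prod>D\<in>A. [:- lift D, 1:]) k \<in> \<O>" if "A \<subseteq> resfield av" for A k
    using that
  proof (induction A arbitrary: k rule: infinite_finite_induct)
    case (insert D A)
    have "coeff [:- lift D, 1:] i \<in> \<O>" for i
      using insert.prems lift_in_O by (auto simp: coeff_pCons in_O_iff split: nat.split)
    moreover have "coeff (\<Prod>D\<in>A. [:- lift D, 1:]) i \<in> \<O>" for i
      using insert by simp
    ultimately have "coeff ([:- lift D, 1:] * (\<Prod>D\<in>A. [:- lift D, 1:])) k \<in> \<O>"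
      unfolding coeff_mult by (intro O_sum O_mult)
    with insert.hyps show ?case
      by simp
  qed simp_all
  moreover have "inverse (\<Prod>D\<in>resfield av - {C}. lift C - lift D) \<in> \<O>"
    using av_lagrange_denominator[OF assms] by (simp add: in_O_iff av_inverse)
  ultimately show ?thesis
    unfolding lagrange_def by (simp add: O_mult)
qed

lemma degree_lagrange_less:
  assumes "C \<in> resfield av"
  shows "degree (lagrange C) < q"
proof -
  have "degree (lagrange C) \<le> degree (\<Prod>D\<in>resfield av - {C}. [:- lift D, 1:])"
    unfolding lagrange_def by (rule degree_smult_le)
  also have "\<dots> \<le> (\<Sum>D\<in>resfield av - {C}. degree [:- lift D, 1:])"
    using degree_prod_sum_le[of "resfield av - {C}" "\<lambda>D. [:- lift D, 1:]"] finite_resfield by (simp add: o_def)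
  also have "\<dots> = q - 1"
    using assms finite_resfield by simp
  also have "\<dots> < q"
    using q_ge_2 by simp
  finally show ?thesis .
qed

lemma poly_lagrange_eq_sum: "C \<in> resfield av \<Longrightarrow> poly (lagrange C) t = (\<Sum>k<q. coeff (lagrange C) k * t ^ k)"
  unfolding poly_altdef
  by (intro sum.mono_neutral_left) (auto simp: coeff_eq_0 dest: degree_lagrange_less)

lemma poly_lagrange_cong:
  assumes "C \<in> resfield av" "t \<in> \<O>"
  shows "av (poly (lagrange C) t - (if red av t = C then 1 else 0)) < 1"
proof -
  define P where "P = (\<Prod>D\<in>resfield av - {C}. lift C - lift D)"
  have "av P = 1"
    unfolding P_def using assms(1) by (rule av_lagrange_denominator)
  have poly_eq: "poly (lagrange C) t = inverse P * (\<Prod>D\<in>resfield av - {C}. t - lift D)"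
    by (simp add: lagrange_def P_def poly_prod)
  show ?thesis
  proof (cases "red av t = C")
    case True
    then have "av (t - lift C) < 1"
      using assms av_lift_red_diff av_minus_commute by metis
    then have "av ((\<Prod>D\<in>resfield av - {C}. t - lift D) - P) < 1"
      unfolding P_def using assms lift_in_O by (intro av_prod_diff_less) (auto intro: O_diff)
    moreover have "P \<noteq> 0"
      using \<open>av P = 1\<close> by auto
    then have "poly (lagrange C) t - 1 = inverse P * ((\<Prod>D\<in>resfield av - {C}. t - lift D) - P)"
      using poly_eq by (simp add: field_simps)
    ultimately show ?thesis
      using True \<open>av P = 1\<close> by (simp add: av_mult av_inverse)
  next
    case False
    have "red av t \<in> resfield av - {C}"
      using False assms(2) red_in_resfield by blast
    then have "(\<Prod>D\<in>resfield av - {C}. t - lift D) = (t - lift (red av t)) * (\<Prod>D\<in>resfield av - {C, red av t}. t - lift D)"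
      using finite_resfield by (simp add: prod.remove Diff_insert2[symmetric])
    moreover have "(\<Prod>D\<in>resfield av - {C, red av t}. t - lift D) \<in> \<O>"
      using assms(2) lift_in_O by (intro O_prod O_diff) auto
    moreover have "av (t - lift (red av t)) < 1"
      using assms(2) av_lift_red_diff av_minus_commute by metis
    ultimately have "av (\<Prod>D\<in>resfield av - {C}. t - lift D) < 1"
      by (simp add: av_mult_less in_O_iff mult.commute[of "t - _"])
    then show ?thesis
      using False \<open>av P = 1\<close> poly_eq by (simp add: av_mult av_inverse)
  qed
qed

lemma poly_lagrange_in_O: "C \<in> resfield av \<Longrightarrow> t \<in> \<O> \<Longrightarrow> poly (lagrange C) t \<in> \<O>"
  by (simp add: poly_lagrange_eq_sum O_sum O_mult O_power coeff_lagrange_in_O)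

end

section \<open>Filtrations with residue coordinates\<close>

locale digit_setting = local_valued_field +
  fixes H :: "nat \<Rightarrow> 'a set" and e :: "nat \<Rightarrow> 'a \<Rightarrow> 'a"
  assumes H_open_subgroup: "\<forall>n\<ge>1. open_subgroup_O av (H n)"
    and H_decreasing: "\<forall>n\<ge>1. H (Suc n) \<subseteq> H n"
    and H_Inter: "(\<Inter>n\<in>{1..}. H n) = {0}"
    and e_cont: "\<forall>j. cont_O av (e j)"
    and e_in_O: "\<forall>j. \<forall>x \<in> intring av. e j x \<in> intring av"
    and red_e_H_invariant: "\<forall>n\<ge>1. \<forall>j<n. \<forall>x \<in> intring av. \<forall>y \<in> intring av.
           x - y \<in> H n \<longrightarrow> red av (e j x) = red av (e j y)"
    and induced_map_bij: "\<forall>n\<ge>1. bij_betw (induced_map av e n) (cosets_O av (H n))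
                         (PiE {..<n} (\<lambda>_. resfield av))"
begin

lemma H_subset_O: "n \<ge> 1 \<Longrightarrow> H n \<subseteq> \<O>"
  and zero_in_H: "n \<ge> 1 \<Longrightarrow> 0 \<in> H n"
  and H_add: "n \<ge> 1 \<Longrightarrow> x \<in> H n \<Longrightarrow> y \<in> H n \<Longrightarrow> x + y \<in> H n"
  and H_minus: "n \<ge> 1 \<Longrightarrow> x \<in> H n \<Longrightarrow> - x \<in> H n"
  and H_open: "n \<ge> 1 \<Longrightarrow> x \<in> H n \<Longrightarrow> \<exists>r>0. \<forall>y\<in>\<O>. av (y - x) < r \<longrightarrow> y \<in> H n"
  using H_open_subgroup unfolding open_subgroup_O_def by blast+

lemma H_antimono:
  assumes "1 \<le> m" "m \<le> n"
  shows "H n \<subseteq> H m"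
  using assms(2)
proof (induction n rule: dec_induct)
  case (step k)
  then have "H (Suc k) \<subseteq> H k"
    using H_decreasing assms(1) by simp
  with step.IH show ?case
    by blast
qed simp

lemma limit_in_H:
  fixes X :: "nat \<Rightarrow> 'a"
  assumes "m \<ge> 1" "L \<in> \<O>" and X: "\<And>n. X n \<in> H m"
    and lim: "\<forall>\<epsilon>>0. \<exists>N. \<forall>n\<ge>N. av (X n - L) < \<epsilon>"
  shows "L \<in> H m"
proof -
  obtain r where "r > 0" and r: "\<And>y. y \<in> \<O> \<Longrightarrow> av y < r \<Longrightarrow> y \<in> H m"
    using H_open[OF \<open>m \<ge> 1\<close> zero_in_H[OF \<open>m \<ge> 1\<close>]] by auto
  obtain N where "\<forall>n\<ge>N. av (X n - L) < r"
    using lim \<open>r > 0\<close> by blast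
  then have "av (X N - L) < r"
    by simp
  have "X N \<in> \<O>"
    using X H_subset_O[OF \<open>m \<ge> 1\<close>] by blast
  have "L - X N \<in> H m"
  proof (rule r)
    show "L - X N \<in> \<O>"
      using \<open>L \<in> \<O>\<close> \<open>X N \<in> \<O>\<close> by (rule O_diff)
    show "av (L - X N) < r"
      using \<open>av (X N - L) < r\<close> by (simp add: av_minus_commute[of L])
  qed
  from H_add[OF \<open>m \<ge> 1\<close> X[of N] this] show ?thesis
    by simp
qed

lemma H_small:
  assumes "\<delta> > 0"
  shows "\<exists>n\<ge>1. \<forall>h\<in>H n. av h < \<delta>"
proof (rule ccontr)
  assume "\<not> ?thesis"
  then have "\<forall>n. \<exists>h. h \<in> H (Suc n) \<and> \<not> av h < \<delta>"
    by auto
  then obtain X where "\<forall>n. X n \<in> H (Suc n) \<and> \<not> av (X n) < \<delta>"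
    by metis
  then have X: "\<And>n. X n \<in> H (Suc n)" and far: "\<And>n. \<not> av (X n) < \<delta>"
    by blast+
  have "X n \<in> \<O>" for n
    using X[of n] H_subset_O[of "Suc n"] by auto
  then obtain r :: "nat \<Rightarrow> nat" and L where "strict_mono r" "L \<in> \<O>"
    and lim: "\<forall>\<epsilon>>0. \<exists>N. \<forall>n\<ge>N. av (X (r n) - L) < \<epsilon>"
    using O_seq_compact[of X] by blast
  have "L \<in> H m" if "m \<ge> 1" for m
  proof -
    have "X (r (m + n)) \<in> H m" for n
      using X[of "r (m + n)"] H_antimono[OF that, of "Suc (r (m + n))"] seq_suble[OF \<open>strict_mono r\<close>, of "m + n"]
      by auto
    moreover have "\<forall>\<epsilon>>0. \<exists>N. \<forall>n\<ge>N. av (X (r (m + n)) - L) < \<epsilon>"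
    proof (intro allI impI)
      fix \<epsilon> :: real
      assume "\<epsilon> > 0"
      then obtain N where "\<forall>n\<ge>N. av (X (r n) - L) < \<epsilon>"
        using lim by blast
      then show "\<exists>N. \<forall>n\<ge>N. av (X (r (m + n)) - L) < \<epsilon>"
        by (intro exI[of _ N]) simp
    qed
    ultimately show ?thesis
      by (rule limit_in_H[OF that \<open>L \<in> \<O>\<close>])
  qed
  then have "L = 0"
    using H_Inter by auto
  obtain N where "\<forall>n\<ge>N. av (X (r n) - L) < \<delta>"
    using lim assms by blast
  with far \<open>L = 0\<close> show False
    by auto
qed

lemma cont_O_H_uniform:
  assumes "cont_O av f" "\<epsilon> > 0"
  shows "\<exists>n\<ge>1. \<forall>x\<in>\<O>. \<forall>y\<in>\<O>. x - y \<in> H n \<longrightarrow> av (f x - f y) < \<epsilon>"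
proof -
  obtain \<delta> where "\<delta> > 0" "\<forall>x\<in>\<O>. \<forall>y\<in>\<O>. av (x - y) < \<delta> \<longrightarrow> av (f x - f y) < \<epsilon>"
    using cont_O_uniform[OF assms] by blast
  moreover obtain n where "n \<ge> 1" "\<forall>h\<in>H n. av h < \<delta>"
    using H_small[OF \<open>\<delta> > 0\<close>] by blast
  ultimately show ?thesis
    by (intro exI[of _ n]) auto
qed

definition residues :: "nat \<Rightarrow> 'a \<Rightarrow> nat \<Rightarrow> 'a set" where
  "residues n x = (\<lambda>j\<in>{..<n}. red av (e j x))"

definition coset_rel :: "nat \<Rightarrow> ('a \<times> 'a) set" where
  "coset_rel n = {(x, y). x \<in> \<O> \<and> y \<in> \<O> \<and> x - y \<in> H n}"

lemma residues_in_PiE: "x \<in> \<O> \<Longrightarrow> residues n x \<in> PiE {..<n} (\<lambda>_. resfield av)"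
  using e_in_O by (auto simp: residues_def red_in_resfield)

lemma residues_eq_if_H:
  assumes "n \<ge> 1" "x \<in> \<O>" "y \<in> \<O>" "x - y \<in> H n"
  shows "residues n x = residues n y"
  unfolding residues_def
proof (intro restrict_ext)
  fix j
  assume "j \<in> {..<n}"
  then show "red av (e j x) = red av (e j y)"
    using red_e_H_invariant assms by blast
qed

lemma equiv_coset_rel:
  assumes "n \<ge> 1"
  shows "equiv \<O> (coset_rel n)"
proof (rule equivI)
  show "refl_on \<O> (coset_rel n)"
    using zero_in_H[OF assms] by (auto simp: refl_on_def coset_rel_def)
  show "sym (coset_rel n)"
    using H_minus[OF assms] by (auto simp: sym_def coset_rel_def) (metis minus_diff_eq)
  show "trans (coset_rel n)"
    using H_add[OF assms] by (auto simp: trans_def coset_rel_def) (metis diff_add_cancel add_diff_eq)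
  show "coset_rel n \<subseteq> \<O> \<times> \<O>"
    by (auto simp: coset_rel_def)
qed

lemma bij_induced_map: "n \<ge> 1 \<Longrightarrow> bij_betw (induced_map av e n) (\<O> // coset_rel n) (PiE {..<n} (\<lambda>_. resfield av))"
  using induced_map_bij by (simp add: cosets_O_def coset_rel_def)

lemma induced_map_class:
  assumes "n \<ge> 1" "x \<in> \<O>"
  shows "induced_map av e n (coset_rel n `` {x}) = residues n x"
proof -
  define y where "y = (SOME y. y \<in> coset_rel n `` {x})"
  have "x \<in> coset_rel n `` {x}"
    using assms by (simp add: coset_rel_def zero_in_H)
  then have "y \<in> coset_rel n `` {x}"
    unfolding y_def by (rule someI)
  then have "residues n x = residues n y"
    using assms by (intro residues_eq_if_H) (auto simp: coset_rel_def)
  then show ?thesis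
    by (simp add: induced_map_def residues_def y_def)
qed

lemma residues_surj:
  assumes "n \<ge> 1" "r \<in> PiE {..<n} (\<lambda>_. resfield av)"
  shows "\<exists>y\<in>\<O>. residues n y = r"
proof -
  obtain C where "C \<in> \<O> // coset_rel n" "r = induced_map av e n C"
    using assms bij_induced_map[OF assms(1)] unfolding bij_betw_def by blast
  then obtain y where "y \<in> \<O>" "r = induced_map av e n (coset_rel n `` {y})"
    by (auto elim!: quotientE)
  then show ?thesis
    using induced_map_class[OF assms(1)] by auto
qed

lemma diff_in_H_iff_residues_eq:
  assumes "n \<ge> 1" "x \<in> \<O>" "y \<in> \<O>"
  shows "x - y \<in> H n \<longleftrightarrow> residues n x = residues n y"
proof
  assume "residues n x = residues n y"
  then have "induced_map av e n (coset_rel n `` {x}) = induced_map av e n (coset_rel n `` {y})"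
    using induced_map_class assms by simp
  moreover have "coset_rel n `` {x} \<in> \<O> // coset_rel n" "coset_rel n `` {y} \<in> \<O> // coset_rel n"
    using assms by (simp_all add: quotientI)
  ultimately have "coset_rel n `` {x} = coset_rel n `` {y}"
    using bij_induced_map[OF assms(1)] by (auto simp: bij_betw_def dest: inj_onD)
  then show "x - y \<in> H n"
    using eq_equiv_class_iff[OF equiv_coset_rel] assms by (simp add: coset_rel_def)
qed (use assms residues_eq_if_H in blast)

definition point :: "nat \<Rightarrow> (nat \<Rightarrow> 'a set) \<Rightarrow> 'a" where
  "point n r = (SOME y. y \<in> \<O> \<and> residues n y = r)"

lemma point:
  assumes "n \<ge> 1" "r \<in> PiE {..<n} (\<lambda>_. resfield av)"
  shows "point n r \<in> \<O>" "residues n (point n r) = r"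
  using someI_ex[OF residues_surj[OF assms, unfolded Bex_def]] unfolding point_def by blast+

subsection \<open>Reductions of the digit products span\<close>

abbreviation f :: "nat \<Rightarrow> 'a \<Rightarrow> 'a" where
  "f i \<equiv> digit_ext q e i"

lemma f_in_O: "x \<in> \<O> \<Longrightarrow> f i x \<in> \<O>"
  unfolding digit_ext_def using e_in_O by (intro O_prod O_power) auto

lemma cont_O_f: "cont_O av (f i)"
  unfolding digit_ext_def
proof (intro cont_O_prod)
  fix j
  show "cont_O av (\<lambda>x. e j x ^ (i div q ^ j mod q))"
    using cont_O_prod[of "{..<i div q ^ j mod q}" "\<lambda>_. e j"] e_cont e_in_O by simp
  show "x \<in> \<O> \<Longrightarrow> e j x ^ (i div q ^ j mod q) \<in> \<O>" for x
    using e_in_O by (simp add: O_power)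
qed

lemma digit_comb_eq_prod_poly:
  assumes "r \<in> PiE {..<n} (\<lambda>_. resfield av)"
  shows "(\<Sum>i<q ^ n. (\<Prod>j<n. coeff (lagrange (r j)) (i div q ^ j mod q)) * f i x) =
    (\<Prod>j<n. poly (lagrange (r j)) (e j x))"
proof -
  have "(\<Sum>i<q ^ n. (\<Prod>j<n. coeff (lagrange (r j)) (i div q ^ j mod q)) * f i x) =
      (\<Sum>i<q ^ n. \<Prod>j<n. coeff (lagrange (r j)) (i div q ^ j mod q) * e j x ^ (i div q ^ j mod q))"
    by (intro sum.cong refl) (simp add: digit_ext_eq_prod[OF q_ge_2] prod.distrib)
  also have "\<dots> = (\<Prod>j<n. \<Sum>k<q. coeff (lagrange (r j)) k * e j x ^ k)"
    by (rule prod_sum_digits[symmetric])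
  also have "\<dots> = (\<Prod>j<n. poly (lagrange (r j)) (e j x))"
    using poly_lagrange_eq_sum[OF PiE_mem[OF assms]] by (intro prod.cong refl) simp
  finally show ?thesis .
qed

lemma indicator_residues_eq_prod:
  assumes "r \<in> PiE {..<n} (\<lambda>_. resfield av)"
  shows "(if residues n x = r then 1 else 0) = (\<Prod>j<n. if red av (e j x) = r j then 1 else (0::'a))"
proof (cases "residues n x = r")
  case True
  then have "red av (e j x) = r j" if "j < n" for j
    using that by (auto simp: residues_def dest: fun_cong[of _ _ j])
  with True show ?thesis
    by (simp add: prod.neutral)
next
  case False
  then obtain j where "j < n" "red av (e j x) \<noteq> r j"
    using assms by (auto simp: residues_def fun_eq_iff PiE_def extensional_def split: if_splits)
  with False show ?thesis
    by (auto intro: prod_zero)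
qed

lemma exists_comb_cong_indicator:
  assumes r: "r \<in> PiE {..<n} (\<lambda>_. resfield av)"
  shows "\<exists>d. (\<forall>i. d i \<in> \<O>) \<and>
    (\<forall>x\<in>\<O>. av ((\<Sum>i<q ^ n. d i * f i x) - (if residues n x = r then 1 else 0)) < 1)"
proof (intro exI conjI ballI allI)
  show "(\<Prod>j<n. coeff (lagrange (r j)) (i div q ^ j mod q)) \<in> \<O>" for i
    using r by (auto intro!: O_prod coeff_lagrange_in_O)
  fix x
  assume "x \<in> \<O>"
  have "av ((\<Prod>j<n. poly (lagrange (r j)) (e j x)) - (\<Prod>j<n. if red av (e j x) = r j then 1 else 0)) < 1"
  proof (rule av_prod_diff_less)
    fix j
    assume "j \<in> {..<n}"
    then have C: "r j \<in> resfield av" and t: "e j x \<in> \<O>"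
      using r e_in_O \<open>x \<in> \<O>\<close> by (auto simp: PiE_mem)
    show "poly (lagrange (r j)) (e j x) \<in> \<O>"
      using C t by (rule poly_lagrange_in_O)
    show "(if red av (e j x) = r j then 1 else 0) \<in> \<O>"
      by simp
    show "av (poly (lagrange (r j)) (e j x) - (if red av (e j x) = r j then 1 else 0)) < 1"
      using C t by (rule poly_lagrange_cong)
  qed
  then show "av ((\<Sum>i<q ^ n. (\<Prod>j<n. coeff (lagrange (r j)) (i div q ^ j mod q)) * f i x) -
      (if residues n x = r then 1 else 0)) < 1"
    by (simp only: digit_comb_eq_prod_poly[OF r] indicator_residues_eq_prod[OF r])
qed

lemma exists_comb_cong:
  assumes "n \<ge> 1" and \<phi>_in_O: "\<And>x. x \<in> \<O> \<Longrightarrow> \<phi> x \<in> \<O>"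
    and \<phi>_cong: "\<And>x y. x \<in> \<O> \<Longrightarrow> y \<in> \<O> \<Longrightarrow> x - y \<in> H n \<Longrightarrow> av (\<phi> x - \<phi> y) < 1"
  shows "\<exists>a. (\<forall>i. a i \<in> \<O>) \<and> (\<forall>x\<in>\<O>. av (\<phi> x - (\<Sum>i<q ^ n. a i * f i x)) < 1)"
proof -
  define T where "T = PiE {..<n} (\<lambda>_. resfield av)"
  have "finite T"
    unfolding T_def by (simp add: finite_PiE finite_resfield)
  have "\<forall>r\<in>T. \<exists>d. (\<forall>i. d i \<in> \<O>) \<and>
      (\<forall>x\<in>\<O>. av ((\<Sum>i<q ^ n. d i * f i x) - (if residues n x = r then 1 else 0)) < 1)"
    unfolding T_def using exists_comb_cong_indicator by blast
  from bchoice[OF this] obtain d where d: "\<forall>r\<in>T. (\<forall>i. d r i \<in> \<O>) \<and>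
      (\<forall>x\<in>\<O>. av ((\<Sum>i<q ^ n. d r i * f i x) - (if residues n x = r then 1 else 0)) < 1)"
    by blast
  then have d_in_O: "\<And>r i. r \<in> T \<Longrightarrow> d r i \<in> \<O>"
    and d_cong: "\<And>r x. r \<in> T \<Longrightarrow> x \<in> \<O> \<Longrightarrow>
      av ((\<Sum>i<q ^ n. d r i * f i x) - (if residues n x = r then 1 else 0)) < 1"
    by blast+
  define a where "a i = (\<Sum>r\<in>T. \<phi> (point n r) * d r i)" for i
  have point_in_O: "point n r \<in> \<O>" if "r \<in> T" for r
    using point(1)[OF \<open>n \<ge> 1\<close>] that by (simp add: T_def)
  have "a i \<in> \<O>" for i
    unfolding a_def using point_in_O \<phi>_in_O d_in_O by (intro O_sum O_mult) auto
  moreover have "av (\<phi> x - (\<Sum>i<q ^ n. a i * f i x)) < 1" if "x \<in> \<O>" for x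
  proof -
    have "(\<Sum>i<q ^ n. a i * f i x) = (\<Sum>r\<in>T. \<phi> (point n r) * (\<Sum>i<q ^ n. d r i * f i x))"
      by (simp add: a_def sum_distrib_left sum_distrib_right sum.swap[of _ T] mult.assoc)
    moreover have "av ((\<Sum>r\<in>T. \<phi> (point n r) * (\<Sum>i<q ^ n. d r i * f i x)) -
        (\<Sum>r\<in>T. \<phi> (point n r) * (if residues n x = r then 1 else 0))) < 1"
      using point_in_O \<phi>_in_O d_cong \<open>x \<in> \<O>\<close> by (intro av_sum_mult_diff_less) auto
    moreover have "(\<Sum>r\<in>T. \<phi> (point n r) * (if residues n x = r then 1 else 0)) = \<phi> (point n (residues n x))"
      using \<open>finite T\<close> residues_in_PiE[OF \<open>x \<in> \<O>\<close>] by (simp add: T_def sum.delta' if_distrib[of "(*) _"] cong: if_cong)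
    moreover have "av (\<phi> (point n (residues n x)) - \<phi> x) < 1"
      using point[OF \<open>n \<ge> 1\<close> residues_in_PiE[OF \<open>x \<in> \<O>\<close>]] \<open>x \<in> \<O>\<close>
      by (intro \<phi>_cong) (simp_all add: diff_in_H_iff_residues_eq[OF \<open>n \<ge> 1\<close>])
    ultimately have "av ((\<Sum>i<q ^ n. a i * f i x) - \<phi> x) < 1"
      by (metis av_diff_trans_less)
    then show ?thesis
      by (simp add: av_minus_commute[of "\<phi> x"])
  qed
  ultimately show ?thesis
    by blast
qed

subsection \<open>Linear independence and orthonormality\<close>

(* The cosets of H n are indexed by residue tuples r, with representatives point n r; residue_values n b
   reduces the combination with coefficients lifted from b and reads it off on these representatives. *)
definition residue_values :: "nat \<Rightarrow> (nat \<Rightarrow> 'a set) \<Rightarrow> (nat \<Rightarrow> 'a set) \<Rightarrow> 'a set" where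
  "residue_values n b =
    (\<lambda>r\<in>PiE {..<n} (\<lambda>_. resfield av). red av (\<Sum>i<q ^ n. lift (b i) * f i (point n r)))"

lemma residue_values_in_PiE:
  assumes "n \<ge> 1" "b \<in> PiE {..<q ^ n} (\<lambda>_. resfield av)"
  shows "residue_values n b \<in> PiE (PiE {..<n} (\<lambda>_. resfield av)) (\<lambda>_. resfield av)"
proof -
  have "lift (b i) \<in> \<O>" if "i < q ^ n" for i
    using assms(2) that by (auto intro: lift_in_O PiE_mem)
  then show ?thesis
    using point[OF assms(1)] f_in_O by (auto simp: residue_values_def intro!: red_in_resfield O_sum O_mult)
qed

lemma residue_values_red:
  assumes "n \<ge> 1" "\<And>i. i < q ^ n \<Longrightarrow> a i \<in> \<O>" "r \<in> PiE {..<n} (\<lambda>_. resfield av)"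
  shows "residue_values n (\<lambda>i\<in>{..<q ^ n}. red av (a i)) r = red av (\<Sum>i<q ^ n. a i * f i (point n r))"
proof -
  define x where "x = point n r"
  have "x \<in> \<O>"
    using point[OF assms(1,3)] by (simp add: x_def)
  have "av ((\<Sum>i<q ^ n. f i x * lift (red av (a i))) - (\<Sum>i<q ^ n. f i x * a i)) < 1"
    using assms(2) f_in_O[OF \<open>x \<in> \<O>\<close>] av_lift_red_diff by (intro av_sum_mult_diff_less) auto
  moreover have "(\<Sum>i<q ^ n. lift (red av (a i)) * f i x) \<in> \<O>" "(\<Sum>i<q ^ n. a i * f i x) \<in> \<O>"
    using assms(2) f_in_O[OF \<open>x \<in> \<O>\<close>] lift_in_O red_in_resfield by (auto intro!: O_sum O_mult)
  ultimately have red_eq: "red av (\<Sum>i<q ^ n. lift (red av (a i)) * f i x) = red av (\<Sum>i<q ^ n. a i * f i x)"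
    by (simp add: red_eq_iff mult.commute)
  have "residue_values n b r = red av (\<Sum>i<q ^ n. lift (b i) * f i x)" for b
    using assms(3) by (simp add: residue_values_def x_def)
  also have "(\<Sum>i<q ^ n. lift ((\<lambda>i\<in>{..<q ^ n}. red av (a i)) i) * f i x) =
      (\<Sum>i<q ^ n. lift (red av (a i)) * f i x)"
    by simp
  finally show ?thesis
    using red_eq by (simp only: x_def)
qed

lemma exists_comb_red_eq:
  assumes "n \<ge> 1" and g: "g \<in> PiE (PiE {..<n} (\<lambda>_. resfield av)) (\<lambda>_. resfield av)"
  shows "\<exists>a. (\<forall>i. a i \<in> \<O>) \<and>
    (\<forall>r\<in>PiE {..<n} (\<lambda>_. resfield av). red av (\<Sum>i<q ^ n. a i * f i (point n r)) = g r)"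
proof -
  define \<phi> where "\<phi> x = lift (g (residues n x))" for x
  have \<phi>_in_O: "\<phi> x \<in> \<O>" if "x \<in> \<O>" for x
    unfolding \<phi>_def using PiE_mem[OF g residues_in_PiE[OF that]] by (rule lift_in_O)
  have \<phi>_cong: "av (\<phi> x - \<phi> y) < 1" if "x \<in> \<O>" "y \<in> \<O>" "x - y \<in> H n" for x y
    using that by (simp add: \<phi>_def diff_in_H_iff_residues_eq[OF assms(1)])
  obtain a where a_in_O: "\<And>i. a i \<in> \<O>"
    and a_cong: "\<And>x. x \<in> \<O> \<Longrightarrow> av (\<phi> x - (\<Sum>i<q ^ n. a i * f i x)) < 1"
    using exists_comb_cong[of n \<phi>, OF assms(1) \<phi>_in_O \<phi>_cong] by blast
  have "red av (\<Sum>i<q ^ n. a i * f i (point n r)) = g r" if r: "r \<in> PiE {..<n} (\<lambda>_. resfield av)" for r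
  proof -
    define x where "x = point n r"
    have "x \<in> \<O>" "residues n x = r"
      using point[OF assms(1) r] by (simp_all add: x_def)
    have "(\<Sum>i<q ^ n. a i * f i x) \<in> \<O>"
      using a_in_O f_in_O \<open>x \<in> \<O>\<close> by (intro O_sum O_mult)
    then have "red av (\<Sum>i<q ^ n. a i * f i x) = red av (\<phi> x)"
      using red_eq_iff \<phi>_in_O[OF \<open>x \<in> \<O>\<close>] a_cong[OF \<open>x \<in> \<O>\<close>] av_minus_commute[of "\<phi> x"] by simp
    also have "\<dots> = g r"
      using red_lift[OF PiE_mem[OF g r]] \<open>residues n x = r\<close> by (simp add: \<phi>_def)
    finally show ?thesis
      by (simp add: x_def)
  qed
  with a_in_O show ?thesis
    by blast
qed

lemma residue_values_surj:
  assumes "n \<ge> 1"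
  shows "residue_values n ` PiE {..<q ^ n} (\<lambda>_. resfield av) =
    PiE (PiE {..<n} (\<lambda>_. resfield av)) (\<lambda>_. resfield av)"
proof (intro equalityI subsetI)
  fix g
  assume "g \<in> residue_values n ` PiE {..<q ^ n} (\<lambda>_. resfield av)"
  then obtain b where "b \<in> PiE {..<q ^ n} (\<lambda>_. resfield av)" "g = residue_values n b"
    by blast
  then show "g \<in> PiE (PiE {..<n} (\<lambda>_. resfield av)) (\<lambda>_. resfield av)"
    using residue_values_in_PiE[OF assms] by simp
next
  fix g
  assume g: "g \<in> PiE (PiE {..<n} (\<lambda>_. resfield av)) (\<lambda>_. resfield av)"
  obtain a where a_in_O: "\<forall>i. a i \<in> \<O>"
    and a_red: "\<forall>r\<in>PiE {..<n} (\<lambda>_. resfield av). red av (\<Sum>i<q ^ n. a i * f i (point n r)) = g r"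
    using exists_comb_red_eq[OF assms g] by blast
  define b where "b = (\<lambda>i\<in>{..<q ^ n}. red av (a i))"
  have "residue_values n b r = g r" for r
  proof (cases "r \<in> PiE {..<n} (\<lambda>_. resfield av)")
    case True
    then show ?thesis
      using residue_values_red[OF assms _ True, of a] a_in_O a_red by (simp add: b_def)
  next
    case False
    then have "g r = undefined"
      by (rule PiE_arb[OF g])
    with False show ?thesis
      by (simp add: residue_values_def)
  qed
  moreover have "b \<in> PiE {..<q ^ n} (\<lambda>_. resfield av)"
    using a_in_O by (simp add: b_def red_in_resfield)
  ultimately show "g \<in> residue_values n ` PiE {..<q ^ n} (\<lambda>_. resfield av)"
    by (metis ext image_eqI)
qed

lemma comb_small_imp_coeffs_small:
  assumes "n \<ge> 1" and a_in_O: "\<And>i. i < q ^ n \<Longrightarrow> a i \<in> \<O>"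
    and small: "\<And>x. x \<in> \<O> \<Longrightarrow> av (\<Sum>i<q ^ n. a i * f i x) < 1"
    and "i < q ^ n"
  shows "av (a i) < 1"
proof -
  \<comment> \<open>residue_values n maps onto a set of the same finite size q ^ q ^ n, so it is injective.\<close>
  define D where "D = PiE {..<q ^ n} (\<lambda>_. resfield av)"
  have "finite D" "card D = q ^ q ^ n"
    by (simp_all add: D_def finite_PiE finite_resfield card_PiE)
  moreover have "card (PiE (PiE {..<n} (\<lambda>_. resfield av)) (\<lambda>_. resfield av)) = q ^ q ^ n"
    by (simp add: card_PiE finite_PiE finite_resfield)
  ultimately have inj: "inj_on (residue_values n) D"
    using residue_values_surj[OF assms(1), folded D_def] by (intro eq_card_imp_inj_on) simp_all
  define b where "b c = (\<lambda>i\<in>{..<q ^ n}. red av (c i))" for c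
  have "residue_values n (b a) r = residue_values n (b (\<lambda>_. 0)) r" for r
  proof (cases "r \<in> PiE {..<n} (\<lambda>_. resfield av)")
    case True
    then have "point n r \<in> \<O>"
      using point[OF assms(1)] by blast
    then have "(\<Sum>i<q ^ n. a i * f i (point n r)) \<in> \<O>"
      using a_in_O f_in_O by (intro O_sum O_mult) auto
    then have "red av (\<Sum>i<q ^ n. a i * f i (point n r)) = red av 0"
      using small[OF \<open>point n r \<in> \<O>\<close>] by (simp add: red_eq_iff)
    then show ?thesis
      using residue_values_red[OF assms(1) _ True, of a] residue_values_red[OF assms(1) _ True, of "\<lambda>_. 0"] a_in_O
      by (simp add: b_def)
  qed (simp add: residue_values_def)
  moreover have "b a \<in> D" "b (\<lambda>_. 0) \<in> D"
    using a_in_O by (simp_all add: D_def b_def red_in_resfield)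
  ultimately have "b a = b (\<lambda>_. 0)"
    using inj by (blast dest: inj_onD)
  then have "red av (a i) = red av 0"
    using \<open>i < q ^ n\<close> unfolding b_def by (metis restrict_apply' lessThan_iff)
  then show ?thesis
    using a_in_O[OF \<open>i < q ^ n\<close>] by (simp add: red_eq_iff)
qed

lemma av_coeff_le_of_comb_bound:
  assumes bound: "\<And>x. x \<in> \<O> \<Longrightarrow> av (\<Sum>k<N. c k * f k x) \<le> B" and "i < N"
  shows "av (c i) \<le> B"
proof (rule ccontr)
  \<comment> \<open>Dividing by a coefficient of maximal absolute value reduces this to comb_small_imp_coeffs_small.\<close>
  assume "\<not> av (c i) \<le> B"
  define M where "M = Max ((\<lambda>k. av (c k)) ` {..<N})"
  have "M \<in> (\<lambda>k. av (c k)) ` {..<N}"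
    unfolding M_def using \<open>i < N\<close> by (intro Max_in) auto
  then obtain m where "m < N" "av (c m) = M"
    by auto
  have le_M: "av (c k) \<le> M" if "k < N" for k
    unfolding M_def using that by (intro Max_ge) auto
  have "0 \<le> B"
    using bound[OF zero_in_O] av_nonneg order_trans by blast
  then have "B < M" "c m \<noteq> 0"
    using le_M[OF \<open>i < N\<close>] \<open>\<not> av (c i) \<le> B\<close> \<open>av (c m) = M\<close> by auto
  have "N < q ^ N"
    by (rule less_q_power)
  define a where "a k = (if k < N then c k / c m else 0)" for k
  have "0 < M"
    using \<open>av (c m) = M\<close> \<open>c m \<noteq> 0\<close> by auto
  have "a k \<in> \<O>" for k
    using le_M \<open>av (c m) = M\<close> \<open>0 < M\<close> by (simp add: a_def in_O_iff av_divide)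
  moreover have "\<not> av (a m) < 1"
    using \<open>m < N\<close> \<open>c m \<noteq> 0\<close> by (simp add: a_def)
  ultimately obtain x where "x \<in> \<O>" "\<not> av (\<Sum>k<q ^ N. a k * f k x) < 1"
    using comb_small_imp_coeffs_small[of N a m] \<open>m < N\<close> \<open>N < q ^ N\<close> by force
  moreover have "{..<q ^ N} \<inter> {k. k < N} = {..<N}"
    using \<open>N < q ^ N\<close> by auto
  then have "(\<Sum>k<q ^ N. a k * f k x) = (\<Sum>k<N. c k * f k x) / c m"
    by (simp add: a_def sum_divide_distrib if_distrib[of "\<lambda>y. y * _"] sum.If_cases cong: if_cong)
  ultimately have "M \<le> av (\<Sum>k<N. c k * f k x)"
    using \<open>av (c m) = M\<close> \<open>B < M\<close> \<open>0 \<le> B\<close> by (simp add: av_divide le_divide_eq)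
  with bound[OF \<open>x \<in> \<O>\<close>] \<open>B < M\<close> show False
    by simp
qed

subsection \<open>Approximation and expansion\<close>

lemma digit_comb_approx_step:
  assumes "cont_O av g" "c \<noteq> 0" "\<And>x. x \<in> \<O> \<Longrightarrow> av (g x) \<le> av c"
  shows "\<exists>N a. (\<forall>i\<ge>N. a i = 0) \<and> (\<forall>x\<in>\<O>. av (g x - (\<Sum>i<N. a i * f i x)) \<le> av c * \<rho>)"
proof -
  define h where "h x = inverse c * g x" for x
  have "cont_O av h"
    unfolding h_def using assms(1) by (rule cont_O_cmult)
  have h_in_O: "h x \<in> \<O>" if "x \<in> \<O>" for x
  proof -
    have "av (h x) = av (g x) / av c"
      by (simp add: h_def av_mult av_inverse divide_inverse mult.commute)
    then show ?thesis
      using assms(2) assms(3)[OF that] by (simp add: in_O_iff)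
  qed
  obtain n where "n \<ge> 1" and h_cong: "\<forall>x\<in>\<O>. \<forall>y\<in>\<O>. x - y \<in> H n \<longrightarrow> av (h x - h y) < 1"
    using cont_O_H_uniform[OF \<open>cont_O av h\<close>, of 1] by auto
  then obtain a where "\<forall>x\<in>\<O>. av (h x - (\<Sum>i<q ^ n. a i * f i x)) < 1"
    using exists_comb_cong[of n h] h_in_O by blast
  then have close: "av (h x - (\<Sum>i<q ^ n. a i * f i x)) \<le> \<rho>" if "x \<in> \<O>" for x
    using that av_le_unif by blast
  define a' where "a' i = (if i < q ^ n then c * a i else 0)" for i
  have "g x - (\<Sum>i<q ^ n. a' i * f i x) = c * (h x - (\<Sum>i<q ^ n. a i * f i x))" for x
    using assms(2) by (simp add: a'_def h_def right_diff_distrib sum_distrib_left mult.assoc)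
  then have "\<forall>x\<in>\<O>. av (g x - (\<Sum>i<q ^ n. a' i * f i x)) \<le> av c * \<rho>"
    using close by (simp add: av_mult mult_left_mono)
  moreover have "\<forall>i\<ge>q ^ n. a' i = 0"
    by (simp add: a'_def)
  ultimately show ?thesis
    by blast
qed

lemma digit_comb_approx_power:
  assumes "cont_O av g" "c \<noteq> 0" "\<And>x. x \<in> \<O> \<Longrightarrow> av (g x) \<le> av c"
  shows "\<exists>N a. (\<forall>i\<ge>N. a i = 0) \<and> (\<forall>x\<in>\<O>. av (g x - (\<Sum>i<N. a i * f i x)) \<le> av c * \<rho> ^ k)"
proof (induction k)
  case 0
  show ?case
    by (rule exI[of _ 0], rule exI[of _ "\<lambda>_. 0"]) (simp add: assms(3))
next
  case (Suc k)
  then obtain N a where a_support: "\<forall>i\<ge>N. a i = 0"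
    and a_approx: "\<forall>x\<in>\<O>. av (g x - (\<Sum>i<N. a i * f i x)) \<le> av c * \<rho> ^ k"
    by blast
  define r where "r x = g x - (\<Sum>i<N. a i * f i x)" for x
  have "cont_O av r"
    unfolding r_def using assms(1) cont_O_f by (intro cont_O_diff cont_O_sum cont_O_cmult)
  moreover have "c * unif ^ k \<noteq> 0"
    using assms(2) unif_nonzero by simp
  moreover have "av (r x) \<le> av (c * unif ^ k)" if "x \<in> \<O>" for x
    using a_approx that by (simp add: r_def av_mult av_power)
  ultimately have "\<exists>N' a'. (\<forall>i\<ge>N'. a' i = 0) \<and>
      (\<forall>x\<in>\<O>. av (r x - (\<Sum>i<N'. a' i * f i x)) \<le> av (c * unif ^ k) * \<rho>)"
    by (rule digit_comb_approx_step)
  then obtain N' a' where a'_support: "\<forall>i\<ge>N'. a' i = 0"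
    and a'_approx: "\<forall>x\<in>\<O>. av (r x - (\<Sum>i<N'. a' i * f i x)) \<le> av (c * unif ^ k) * \<rho>"
    by blast
  define b where "b i = a i + a' i" for i
  have "(\<Sum>i<max N N'. b i * f i x) = (\<Sum>i<N. a i * f i x) + (\<Sum>i<N'. a' i * f i x)" for x
    unfolding b_def using a_support a'_support by (intro sum_lessThan_max_add) auto
  then have "\<forall>x\<in>\<O>. av (g x - (\<Sum>i<max N N'. b i * f i x)) \<le> av c * \<rho> ^ Suc k"
    using a'_approx by (simp add: r_def av_mult av_power algebra_simps)
  moreover have "\<forall>i\<ge>max N N'. b i = 0"
    using a_support a'_support by (simp add: b_def)
  ultimately show ?case
    by blast
qed

lemma digit_comb_approx:
  assumes "cont_O av F" "\<epsilon> > 0"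
  shows "\<exists>N a. (\<forall>i\<ge>N. a i = 0) \<and> (\<forall>x\<in>\<O>. av (F x - (\<Sum>i<N. a i * f i x)) \<le> \<epsilon>)"
proof -
  obtain B where B: "\<And>x. x \<in> \<O> \<Longrightarrow> av (F x) \<le> B"
    using cont_O_bounded[OF assms(1)] by blast
  have "1 < inverse \<rho>"
    using unif_pos unif_less_1 by (simp add: one_less_inverse)
  then obtain m where "B < inverse \<rho> ^ m"
    using real_arch_pow by blast
  define c where "c = inverse unif ^ m"
  have "c \<noteq> 0" "av c = inverse \<rho> ^ m"
    using unif_nonzero by (simp_all add: c_def av_power av_inverse)
  obtain k where "\<rho> ^ k < \<epsilon> * \<rho> ^ m"
    using real_arch_pow_inv[of "\<epsilon> * \<rho> ^ m" \<rho>] assms(2) unif_pos unif_less_1 by auto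
  then have "av c * \<rho> ^ k \<le> \<epsilon>"
    using unif_pos by (simp add: \<open>av c = inverse \<rho> ^ m\<close> power_inverse field_simps)
  moreover obtain N a where "\<forall>i\<ge>N. a i = 0" "\<forall>x\<in>\<O>. av (F x - (\<Sum>i<N. a i * f i x)) \<le> av c * \<rho> ^ k"
    using digit_comb_approx_power[OF assms(1) \<open>c \<noteq> 0\<close>, of k] B \<open>B < inverse \<rho> ^ m\<close> \<open>av c = inverse \<rho> ^ m\<close>
    by fastforce
  ultimately show ?thesis
    by (meson order_trans)
qed

lemma approximants_exist:
  assumes "cont_O av F"
  shows "\<exists>N A. \<forall>k. (\<forall>i\<ge>N k. A k i = 0) \<and> (\<forall>x\<in>\<O>. av (F x - (\<Sum>i<N k. A k i * f i x)) \<le> \<rho> ^ k)"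
proof -
  have "\<forall>k. \<exists>N a. (\<forall>i\<ge>N. a i = 0) \<and> (\<forall>x\<in>\<O>. av (F x - (\<Sum>i<N. a i * f i x)) \<le> \<rho> ^ k)"
    using digit_comb_approx[OF assms] unif_pos by simp
  then show ?thesis
    by metis
qed

lemma approximant_coeff_diff:
  assumes support: "\<And>k i. i \<ge> N k \<Longrightarrow> A k i = 0"
    and close: "\<And>k x. x \<in> \<O> \<Longrightarrow> av (F x - (\<Sum>i<N k. A k i * f i x)) \<le> \<rho> ^ k"
  shows "av (A k i - A l i) \<le> max (\<rho> ^ k) (\<rho> ^ l)"
proof -
  define M where "M = max (max (N k) (N l)) (Suc i)"
  have partial: "av (F x - (\<Sum>j<M. A m j * f j x)) \<le> max (\<rho> ^ k) (\<rho> ^ l)" if "m \<in> {k, l}" "x \<in> \<O>" for m x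
  proof -
    have "N m \<le> M"
      using that(1) unfolding M_def by (auto simp: le_max_iff_disj)
    then have "av (F x - (\<Sum>j<M. A m j * f j x)) \<le> \<rho> ^ m"
      using close[OF that(2), of m] sum_lessThan_support[where a = "A m" and g = "\<lambda>j. f j x" and N = "N m" and M = M] support by simp
    then show ?thesis
      using that(1) by auto
  qed
  have "av (\<Sum>j<M. (A k j - A l j) * f j x) \<le> max (\<rho> ^ k) (\<rho> ^ l)" if "x \<in> \<O>" for x
  proof -
    have eq: "(\<Sum>j<M. (A k j - A l j) * f j x) = (F x - (\<Sum>j<M. A l j * f j x)) - (F x - (\<Sum>j<M. A k j * f j x))"
      by (simp add: left_diff_distrib sum_subtractf)
    have "av (F x - (\<Sum>j<M. A l j * f j x)) \<le> max (\<rho> ^ k) (\<rho> ^ l)"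
      "av (F x - (\<Sum>j<M. A k j * f j x)) \<le> max (\<rho> ^ k) (\<rho> ^ l)"
      using partial that by simp_all
    then show ?thesis
      unfolding eq by (rule av_diff_le)
  qed
  moreover have "i < M"
    by (simp add: M_def)
  ultimately show ?thesis
    by (rule av_coeff_le_of_comb_bound)
qed

lemma approximant_coeffs_converge:
  assumes support: "\<And>k i. i \<ge> N k \<Longrightarrow> A k i = 0"
    and close: "\<And>k x. x \<in> \<O> \<Longrightarrow> av (F x - (\<Sum>i<N k. A k i * f i x)) \<le> \<rho> ^ k"
  shows "\<exists>c. \<forall>k i. av (c i - A k i) \<le> \<rho> ^ k"
proof -
  note diff = approximant_coeff_diff[OF support close]
  have "\<exists>L. \<forall>\<epsilon>>0. \<exists>K. \<forall>k\<ge>K. av (A k i - L) < \<epsilon>" for i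
  proof (rule av_Cauchy_convergent, intro allI impI)
    fix \<epsilon> :: real
    assume "\<epsilon> > 0"
    then obtain K where "\<rho> ^ K < \<epsilon>"
      using real_arch_pow_inv unif_less_1 by blast
    moreover have "max (\<rho> ^ k) (\<rho> ^ l) \<le> \<rho> ^ K" if "K \<le> k" "K \<le> l" for k l
      using that unif_pos unif_less_1 by (simp add: power_decreasing)
    ultimately show "\<exists>K. \<forall>k\<ge>K. \<forall>l\<ge>K. av (A k i - A l i) < \<epsilon>"
      using diff by (meson le_less_trans)
  qed
  then obtain c where lim: "\<And>i. \<forall>\<epsilon>>0. \<exists>K. \<forall>k\<ge>K. av (A k i - c i) < \<epsilon>"
    by metis
  have "av (c i - A k i) \<le> \<rho> ^ k" for k i
  proof -
    obtain K where "\<forall>l\<ge>K. av (A l i - c i) < \<rho> ^ k"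
      using lim unif_pos by (meson zero_less_power)
    then have "av (c i - A (max K k) i) \<le> \<rho> ^ k"
      by (simp add: av_minus_commute[of "c i"] less_imp_le)
    moreover have "av (A (max K k) i - A k i) \<le> \<rho> ^ k"
      using diff[of "max K k" i k] unif_pos unif_less_1 by (simp add: power_decreasing)
    ultimately show ?thesis
      by (rule av_diff_trans_le)
  qed
  then show ?thesis
    by blast
qed

lemma remainder_le_of_approximants:
  assumes support: "\<And>k i. i \<ge> N k \<Longrightarrow> A k i = 0"
    and close: "\<And>k x. x \<in> \<O> \<Longrightarrow> av (F x - (\<Sum>i<N k. A k i * f i x)) \<le> \<rho> ^ k"
    and c: "\<And>k i. av (c i - A k i) \<le> \<rho> ^ k"
    and "N k \<le> M" "x \<in> \<O>"
  shows "av (F x - (\<Sum>i<M. c i * f i x)) \<le> \<rho> ^ k"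
proof -
  have eq: "F x - (\<Sum>i<M. c i * f i x) = (F x - (\<Sum>i<N k. A k i * f i x)) + (\<Sum>i<M. f i x * (A k i - c i))"
    using sum_lessThan_support[where a = "A k" and g = "\<lambda>i. f i x" and N = "N k" and M = M] support \<open>N k \<le> M\<close>
    by (simp add: algebra_simps sum_subtractf)
  have "av (\<Sum>i<M. f i x * (A k i - c i)) \<le> \<rho> ^ k"
    using c f_in_O[OF \<open>x \<in> \<O>\<close>] unif_pos
    by (intro av_sum_le) (simp_all add: in_O_iff av_mult_le av_minus_commute[of "A k _"])
  with close[OF \<open>x \<in> \<O>\<close>] show ?thesis
    unfolding eq by (rule av_add_le)
qed

lemma av_coeff_le_supnorm:
  assumes "cont_O av F"
    and rem: "\<And>k. \<exists>N. \<forall>M\<ge>N. \<forall>x\<in>\<O>. av (F x - (\<Sum>i<M. c i * f i x)) \<le> \<rho> ^ k"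
  shows "av (c i) \<le> supnorm av F"
proof -
  obtain B where B: "\<And>x. x \<in> \<O> \<Longrightarrow> av (F x) \<le> B"
    using cont_O_bounded[OF assms(1)] by blast
  show ?thesis
  proof (rule le_if_le_max_power[OF unif_less_1 supnorm_nonneg[where g = F, OF B]])
    fix k
    obtain N where N: "\<forall>M\<ge>N. \<forall>x\<in>\<O>. av (F x - (\<Sum>i<M. c i * f i x)) \<le> \<rho> ^ k"
      using rem by blast
    define M where "M = max N (Suc i)"
    have "av (\<Sum>j<M. c j * f j x) \<le> max (\<rho> ^ k) (supnorm av F)" if "x \<in> \<O>" for x
    proof -
      have "av (F x) \<le> max (\<rho> ^ k) (supnorm av F)"
        using av_le_supnorm[where g = F, OF B that] by simp
      moreover have "av (F x - (\<Sum>j<M. c j * f j x)) \<le> max (\<rho> ^ k) (supnorm av F)"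
        using N that by (simp add: M_def le_max_iff_disj)
      ultimately have "av (F x - (F x - (\<Sum>j<M. c j * f j x))) \<le> max (\<rho> ^ k) (supnorm av F)"
        by (rule av_diff_le)
      then show ?thesis
        by simp
    qed
    moreover have "i < M"
      by (simp add: M_def)
    ultimately show "av (c i) \<le> max (\<rho> ^ k) (supnorm av F)"
      by (rule av_coeff_le_of_comb_bound)
  qed
qed

lemma av_le_SUP_coeffs:
  assumes rem: "\<And>k. \<exists>N. \<forall>M\<ge>N. \<forall>x\<in>\<O>. av (F x - (\<Sum>i<M. c i * f i x)) \<le> \<rho> ^ k"
    and bdd: "bdd_above (range (\<lambda>i. av (c i)))" and "x \<in> \<O>"
  shows "av (F x) \<le> (SUP i. av (c i))"
proof -
  define S where "S = (SUP i. av (c i))"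
  have c_le_S: "av (c i) \<le> S" for i
    unfolding S_def using bdd by (rule cSUP_upper[OF UNIV_I])
  have "0 \<le> S"
    using c_le_S[of 0] av_nonneg[of "c 0"] by linarith
  have "av (c i * f i x) \<le> S" for i
    using c_le_S[of i] f_in_O[OF \<open>x \<in> \<O>\<close>, of i] mult_right_le_one_le[of "av (c i)" "av (f i x)"]
    by (simp add: in_O_iff av_mult)
  then have partial_le: "av (\<Sum>i<N. c i * f i x) \<le> S" for N
    using \<open>0 \<le> S\<close> by (intro av_sum_le)
  show ?thesis
    unfolding S_def[symmetric]
  proof (rule le_if_le_max_power[OF unif_less_1 \<open>0 \<le> S\<close>])
    fix k
    obtain N where N: "\<forall>M\<ge>N. \<forall>x\<in>\<O>. av (F x - (\<Sum>i<M. c i * f i x)) \<le> \<rho> ^ k"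
      using rem by blast
    have "av (F x) \<le> max (av (F x - (\<Sum>i<N. c i * f i x))) (av (\<Sum>i<N. c i * f i x))"
      using av_add[of "F x - (\<Sum>i<N. c i * f i x)" "\<Sum>i<N. c i * f i x"] by simp
    then show "av (F x) \<le> max (\<rho> ^ k) S"
      using N \<open>x \<in> \<O>\<close> partial_le[of N] by fastforce
  qed
qed

lemma supnorm_eq_SUP_coeffs:
  assumes "cont_O av F"
    and rem: "\<And>k. \<exists>N. \<forall>M\<ge>N. \<forall>x\<in>\<O>. av (F x - (\<Sum>i<M. c i * f i x)) \<le> \<rho> ^ k"
  shows "supnorm av F = (SUP i. av (c i))"
proof (rule antisym)
  have c_le: "av (c i) \<le> supnorm av F" for i
    using assms by (rule av_coeff_le_supnorm)
  then have "bdd_above (range (\<lambda>i. av (c i)))"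
    by (rule bdd_aboveI2)
  then show "supnorm av F \<le> (SUP i. av (c i))"
    using rem av_le_SUP_coeffs by (intro supnorm_le) blast
  show "(SUP i. av (c i)) \<le> supnorm av F"
    using c_le by (rule cSUP_least[OF UNIV_not_empty])
qed

lemma digit_expansion:
  assumes "cont_O av F"
  shows "\<exists>c. (\<lambda>n. av (c n)) \<longlonglongrightarrow> 0 \<and>
    (\<lambda>N. supnorm av (\<lambda>x. F x - (\<Sum>n<N. c n * f n x))) \<longlonglongrightarrow> 0 \<and>
    supnorm av F = (SUP n. av (c n))"
proof -
  obtain N A where support: "\<And>k i. i \<ge> N k \<Longrightarrow> A k i = 0"
    and close: "\<And>k x. x \<in> \<O> \<Longrightarrow> av (F x - (\<Sum>i<N k. A k i * f i x)) \<le> \<rho> ^ k"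
    using approximants_exist[OF assms] by blast
  obtain c where c: "\<And>k i. av (c i - A k i) \<le> \<rho> ^ k"
    using approximant_coeffs_converge[of N A F, OF support close] by blast
  have rem: "av (F x - (\<Sum>i<M. c i * f i x)) \<le> \<rho> ^ k" if "N k \<le> M" "x \<in> \<O>" for k M x
    using support close c that by (rule remainder_le_of_approximants)
  have "(\<lambda>n. av (c n)) \<longlonglongrightarrow> 0"
  proof (rule LIMSEQ_zero_if_le_power[OF unif_less_1])
    fix k
    have "av (c n) \<le> \<rho> ^ k" if "n \<ge> N k" for n
      using c[of n k] support[OF that] by simp
    then show "\<exists>M. \<forall>n\<ge>M. 0 \<le> av (c n) \<and> av (c n) \<le> \<rho> ^ k"
      by auto
  qed
  moreover have "(\<lambda>M. supnorm av (\<lambda>x. F x - (\<Sum>n<M. c n * f n x))) \<longlonglongrightarrow> 0"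
  proof (rule LIMSEQ_zero_if_le_power[OF unif_less_1])
    fix k
    have "0 \<le> supnorm av (\<lambda>x. F x - (\<Sum>n<M. c n * f n x)) \<and> supnorm av (\<lambda>x. F x - (\<Sum>n<M. c n * f n x)) \<le> \<rho> ^ k"
      if "N k \<le> M" for M
      using supnorm_nonneg[of _ "\<rho> ^ k"] supnorm_le[of _ "\<rho> ^ k"] rem[OF that] by simp
    then show "\<exists>N'. \<forall>M\<ge>N'. 0 \<le> supnorm av (\<lambda>x. F x - (\<Sum>n<M. c n * f n x)) \<and>
        supnorm av (\<lambda>x. F x - (\<Sum>n<M. c n * f n x)) \<le> \<rho> ^ k"
      by blast
  qed
  moreover have "supnorm av F = (SUP n. av (c n))"
    using assms rem by (intro supnorm_eq_SUP_coeffs) blast+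
  ultimately show ?thesis
    by blast
qed

theorem orthonormal_basis_digit_ext: "orthonormal_basis av (digit_ext q e)"
  unfolding orthonormal_basis_def using cont_O_f digit_expansion by blast

end

theorem theorem3p3:
  fixes av :: "'a::field \<Rightarrow> real"
    and H :: "nat \<Rightarrow> 'a set"
    and e :: "nat \<Rightarrow> 'a \<Rightarrow> 'a"
  assumes "local_field av"
    and "\<forall>n\<ge>1. open_subgroup_O av (H n)"
    and "\<forall>n\<ge>1. H (Suc n) \<subseteq> H n"
    and "(\<Inter>n\<in>{1..}. H n) = {0}"
    and "\<forall>j. cont_O av (e j)"
    and "\<forall>j. \<forall>x \<in> intring av. e j x \<in> intring av"
    and "\<forall>n\<ge>1. \<forall>j<n. \<forall>x \<in> intring av. \<forall>y \<in> intring av.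
           x - y \<in> H n \<longrightarrow> red av (e j x) = red av (e j y)"
    and "\<forall>n\<ge>1. bij_betw (induced_map av e n) (cosets_O av (H n))
                         (PiE {..<n} (\<lambda>_. resfield av))"
  shows "orthonormal_basis av (digit_ext (card (resfield av)) e)"
proof -
  interpret digit_setting av H e
    by unfold_locales (fact assms)+
  show ?thesis
    by (rule orthonormal_basis_digit_ext)
qed

end
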